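(* Let $l,a,s,t\in\mathbb N$, let $L_{\sigma\tau}(\mathbf r)$, $\sigma\in[s]$, $\tau\in[t]$, be $\mathbb Z$-linear forms in independent variables $r_1,\dots,r_{l+a}$, and let $X_1,\dots,X_{l+a},Y_1,\dots,Y_s$ be independent variables. For $\mathbf r\in\mathbb N_0^{l+a}$ set $\mathbf X^{\mathbf r}=\prod_{\rho\in[l+a]}X_\rho^{r_\rho}$ and $m_{\mathbf r}(\mathbf Y)=\prod_{\sigma\in[s]}Y_\sigma^{\min_{\tau\in[t]}\{L_{\sigma\tau}(\mathbf r)\}}$. Define $$Z^\circ(\mathbf X,\mathbf Y)=\sum_{\mathbf r\in\mathbb N^{l}\times(\mathbb N_0^a\setminus\mathbb N^a)}\mathbf X^{\mathbf r}m_{\mathbf r}(\mathbf Y),\qquad Z(\mathbf X,\mathbf Y)=\sum_{\mathbf r\in\mathbb N_0^{l}\times(\mathbb N_0^a\setminus\mathbb N^a)}\mathbf X^{\mathbf r}m_{\mathbf r}(\mathbf Y).$$ Then, as rational functions, $$Z^\circ(\mathbf X^{-1},\mathbf Y^{-1})=(-1)^{l+a-1}Z(\mathbf X,\mathbf Y).$$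
   Context: $\mathbb N=\{1,2,\dots\}$, $\mathbb N_0=\mathbb N\cup\{0\}$; in $\mathbb N^l\times(\mathbb N_0^a\setminus\mathbb N^a)$ the first $l$ coordinates are $r_1,\dots,r_l$ and the last $a$ coordinates are $r_{l+1},\dots,r_{l+a}$. *)

theory Defs
  imports "HOL-Analysis.Analysis"
begin

text \<open>Variables r_1..r_{l+a} are indexed 0..l+a-1 (first l coordinates: indices < l).
  An exponent vector r is a function nat => nat vanishing outside {0..<l+a}.\<close>

definition linform :: "(nat \<Rightarrow> nat \<Rightarrow> nat \<Rightarrow> int) \<Rightarrow> nat \<Rightarrow> nat \<Rightarrow> nat \<Rightarrow> (nat \<Rightarrow> nat) \<Rightarrow> int" where
  "linform c n \<sigma> \<tau> r = (\<Sum>\<rho><n. c \<sigma> \<tau> \<rho> * int (r \<rho>))"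

definition Zterm :: "(nat \<Rightarrow> nat \<Rightarrow> nat \<Rightarrow> int) \<Rightarrow> nat \<Rightarrow> nat \<Rightarrow> nat \<Rightarrow>
    (nat \<Rightarrow> complex) \<Rightarrow> (nat \<Rightarrow> complex) \<Rightarrow> (nat \<Rightarrow> nat) \<Rightarrow> complex" where
  "Zterm c n s t X Y r =
     (\<Prod>\<rho><n. X \<rho> ^ r \<rho>) *
     (\<Prod>\<sigma><s. Y \<sigma> powi (Min ((\<lambda>\<tau>. linform c n \<sigma> \<tau> r) ` {..<t})))"

definition cone_circ :: "nat \<Rightarrow> nat \<Rightarrow> (nat \<Rightarrow> nat) set" where
  "cone_circ l a = {r. (\<forall>\<rho>. l + a \<le> \<rho> \<longrightarrow> r \<rho> = 0) \<and> (\<forall>\<rho><l. 1 \<le> r \<rho>)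
                       \<and> (\<exists>\<rho>. l \<le> \<rho> \<and> \<rho> < l + a \<and> r \<rho> = 0)}"

definition cone :: "nat \<Rightarrow> nat \<Rightarrow> (nat \<Rightarrow> nat) set" where
  "cone l a = {r. (\<forall>\<rho>. l + a \<le> \<rho> \<longrightarrow> r \<rho> = 0)
                  \<and> (\<exists>\<rho>. l \<le> \<rho> \<and> \<rho> < l + a \<and> r \<rho> = 0)}"

definition is_mpoly :: "nat \<Rightarrow> ((nat \<Rightarrow> nat) \<Rightarrow> complex) \<Rightarrow> bool" where
  "is_mpoly n p \<longleftrightarrow> finite {e. p e \<noteq> 0} \<and> (\<forall>e. p e \<noteq> 0 \<longrightarrow> (\<forall>i. n \<le> i \<longrightarrow> e i = 0))"

definition mpoly_eval :: "nat \<Rightarrow> ((nat \<Rightarrow> nat) \<Rightarrow> complex) \<Rightarrow> (nat \<Rightarrow> complex) \<Rightarrow> complex" where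
  "mpoly_eval n p z = (\<Sum>e\<in>{e. p e \<noteq> 0}. p e * (\<Prod>i<n. z i ^ e i))"

definition joinv :: "nat \<Rightarrow> (nat \<Rightarrow> complex) \<Rightarrow> (nat \<Rightarrow> complex) \<Rightarrow> nat \<Rightarrow> complex" where
  "joinv n X Y i = (if i < n then X i else Y (i - n))"

end

theory Submission
  imports Defs "HOL-Computational_Algebra.Polynomial"
begin

text \<open>
  Sorting exponent vectors by their zero set \<open>S\<close> among the last \<open>a\<close> coordinates writes
  \<open>N\<^sub>0\<^sup>l \<times> (N\<^sub>0\<^sup>a - N\<^sup>a)\<close> as a disjoint union of half-open orthants, while
  \<open>N\<^sup>l \<times> (N\<^sub>0\<^sup>a - N\<^sup>a)\<close> is, by inclusion-exclusion over \<open>S\<close>, an alternating sum of the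
  complementary half-open orthants. Stellar subdivisions triangulate each orthant into simplicial
  cones on which every difference \<open>L\<^sub>\<sigma>\<^sub>\<tau> - L\<^sub>\<sigma>\<^sub>\<tau>'\<close> has constant sign, so that
  \<open>min\<^sub>\<tau> L\<^sub>\<sigma>\<^sub>\<tau>\<close> is linear and the summand is a multiplicative character there. A generic
  tie-breaking vector \<open>q\<close> turns the triangulation into a partition of the orthant into half-open
  cones, and \<open>-q\<close> does the same for the complementary orthant. The generating function of a
  half-open simplicial cone is the sum over its fundamental parallelepiped times
  \<open>\<Prod>\<^sub>k 1/(1 - x\<^sup>v\<^sup>k)\<close>; reflecting the parallelepiped in its centre gives Stanley's reciprocity
  with sign \<open>(-1)\<^sup>d\<^sup>i\<^sup>m\<close> for the complementary half-open cone, and the signs of the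
  inclusion-exclusion and of the reciprocity combine to \<open>(-1)\<^sup>l\<^sup>+\<^sup>a\<^sup>-\<^sup>1\<close>. All series converge
  absolutely near \<open>X = 0, Y = 1\<close>, respectively near \<open>X = \<infinity>, Y = 1\<close>, where every generator has
  character value of modulus \<open>< 1\<close>, respectively \<open>> 1\<close>.
\<close>

lemma has_sum_geometric:
  fixes z :: "'a::{real_normed_field,banach}"
  assumes "norm z < 1"
  shows "((\<lambda>n. z ^ n) has_sum (1 / (1 - z))) UNIV"
  by (rule norm_summable_imp_has_sum)
     (use assms in \<open>auto simp: norm_power intro!: summable_geometric geometric_sums\<close>)

lemma abs_summable_on_prod_geometric:
  fixes w :: "nat \<Rightarrow> complex"
  assumes J: "finite J" and w: "\<And>k. k \<in> J \<Longrightarrow> norm (w k) < 1"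
  shows "(\<lambda>m. norm (\<Prod>k\<in>J. w k ^ m k)) summable_on (PiE J (\<lambda>_. UNIV))"
proof (subst abs_summable_iff_bdd_above, rule bdd_aboveI2)
  fix F :: "(nat \<Rightarrow> nat) set" assume F: "F \<in> {F. F \<subseteq> PiE J (\<lambda>_. UNIV) \<and> finite F}"
  define N where "N = Max ((\<lambda>(m,k). m k) ` (F \<times> J))"
  have "m k \<le> N" if "m \<in> F" "k \<in> J" for m k
    unfolding N_def using that F J by (intro Max_ge) force+
  then have sub: "F \<subseteq> PiE J (\<lambda>_. {..N})"
    using F by (auto simp: PiE_def Pi_def)
  have "(\<Sum>m\<in>F. norm (\<Prod>k\<in>J. w k ^ m k)) = (\<Sum>m\<in>F. \<Prod>k\<in>J. norm (w k) ^ m k)"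
    by (simp add: prod_norm[symmetric] norm_power)
  also have "\<dots> \<le> (\<Sum>m\<in>PiE J (\<lambda>_. {..N}). \<Prod>k\<in>J. norm (w k) ^ m k)"
    by (rule sum_mono2) (use sub J in \<open>auto simp: finite_PiE intro: prod_nonneg\<close>)
  also have "\<dots> = (\<Prod>k\<in>J. \<Sum>j\<le>N. norm (w k) ^ j)"
    by (rule prod_sum_PiE[symmetric]) (use J in auto)
  also have "\<dots> \<le> (\<Prod>k\<in>J. 1 / (1 - norm (w k)))"
  proof (rule prod_mono, safe)
    fix k assume k: "k \<in> J"
    show "0 \<le> (\<Sum>j\<le>N. norm (w k) ^ j)" by (intro sum_nonneg) auto
    have "(\<Sum>j\<le>N. norm (w k) ^ j) \<le> (\<Sum>j. norm (w k) ^ j)"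
      using w[OF k] by (intro sum_le_suminf summable_geometric) auto
    also have "\<dots> = 1 / (1 - norm (w k))"
      using w[OF k] by (subst suminf_geometric) auto
    finally show "(\<Sum>j\<le>N. norm (w k) ^ j) \<le> 1 / (1 - norm (w k))" .
  qed
  finally show "(\<Sum>m\<in>F. norm (\<Prod>k\<in>J. w k ^ m k)) \<le> (\<Prod>k\<in>J. 1 / (1 - norm (w k)))" .
qed

lemma has_sum_prod_geometric:
  fixes w :: "nat \<Rightarrow> complex"
  assumes J: "finite J" and w: "\<And>k. k \<in> J \<Longrightarrow> norm (w k) < 1"
  shows "((\<lambda>m. \<Prod>k\<in>J. w k ^ m k) has_sum (\<Prod>k\<in>J. 1 / (1 - w k))) (PiE J (\<lambda>_. UNIV))"
proof -
  have "infsum (\<lambda>m. \<Prod>k\<in>J. w k ^ m k) (PiE J (\<lambda>_. UNIV)) = (\<Prod>k\<in>J. infsum (\<lambda>j. w k ^ j) UNIV)"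
  proof (rule infsum_prod_PiE_abs[OF J])
    fix k assume k: "k \<in> J"
    show "(\<lambda>j. norm (w k ^ j)) summable_on UNIV"
      using has_sum_geometric[of "norm (w k)"] w[OF k] by (auto simp: norm_power summable_on_def)
  qed
  also have "\<dots> = (\<Prod>k\<in>J. 1 / (1 - w k))"
    using w by (intro prod.cong refl) (simp add: infsumI has_sum_geometric)
  finally show ?thesis
    using abs_summable_summable[OF abs_summable_on_prod_geometric[OF J w]] by (simp add: has_sum_iff)
qed

lemma has_sum_sum_fun:
  fixes f :: "'i \<Rightarrow> 'a \<Rightarrow> 'b::topological_comm_monoid_add"
  shows "finite I \<Longrightarrow> (\<And>i. i \<in> I \<Longrightarrow> (f i has_sum s i) A) \<Longrightarrow>
    ((\<lambda>x. \<Sum>i\<in>I. f i x) has_sum (\<Sum>i\<in>I. s i)) A"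
  by (induction I rule: finite_induct) (auto intro: has_sum_add)

text \<open>Lattice points are integer vectors \<open>z :: nat \<Rightarrow> int\<close> supported on a finite coordinate set \<open>J\<close>.
  A simplicial cone is given by integer generators \<open>V k\<close> and the real dual basis \<open>L k\<close>
  (\<open>k \<in> J\<close>), so that every point \<open>z\<close> has coordinates \<open>rdot J (L k) z\<close> with respect to the \<open>V k\<close>.\<close>

definition rdot :: "nat set \<Rightarrow> (nat \<Rightarrow> real) \<Rightarrow> (nat \<Rightarrow> real) \<Rightarrow> real" where
  "rdot J f z = (\<Sum>i\<in>J. f i * z i)"

definition idot :: "nat set \<Rightarrow> (nat \<Rightarrow> int) \<Rightarrow> (nat \<Rightarrow> int) \<Rightarrow> int" where
  "idot J b v = (\<Sum>i\<in>J. b i * v i)"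

definition real_vec :: "(nat \<Rightarrow> int) \<Rightarrow> nat \<Rightarrow> real" where
  "real_vec z = (\<lambda>i. real_of_int (z i))"

definition supp_on :: "nat set \<Rightarrow> (nat \<Rightarrow> 'a::zero) \<Rightarrow> bool" where
  "supp_on J z \<longleftrightarrow> (\<forall>i. i \<notin> J \<longrightarrow> z i = 0)"

definition simplicial_cone :: "nat set \<Rightarrow> (nat \<Rightarrow> nat \<Rightarrow> int) \<Rightarrow> (nat \<Rightarrow> nat \<Rightarrow> real) \<Rightarrow> bool" where
  "simplicial_cone J V L \<longleftrightarrow> (\<forall>k\<in>J. supp_on J (V k)) \<and>
     (\<forall>k\<in>J. \<forall>j\<in>J. rdot J (L k) (real_vec (V j)) = (if k = j then 1 else 0)) \<and>
     (\<forall>z. \<forall>i\<in>J. z i = (\<Sum>k\<in>J. rdot J (L k) z * real_vec (V k) i))"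

lemma rdot_lin_left: "rdot J (\<lambda>x. a * f x + b * g x) z = a * rdot J f z + b * rdot J g z"
  by (simp add: rdot_def sum.distrib sum_distrib_left algebra_simps)

lemma rdot_diff_left: "rdot J (\<lambda>x. f x - b * g x) z = rdot J f z - b * rdot J g z"
  by (simp add: rdot_def sum_subtractf sum_distrib_left algebra_simps)

lemma rdot_divide_left: "rdot J (\<lambda>x. f x / a) z = rdot J f z / a"
  by (simp add: rdot_def sum_divide_distrib)

lemma rdot_lin_right: "rdot J f (\<lambda>x. a * z x + b * y x) = a * rdot J f z + b * rdot J f y"
  by (simp add: rdot_def sum.distrib sum_distrib_left algebra_simps)

lemma rdot_uminus_right: "rdot J g (\<lambda>x. - q x) = - rdot J g q"
  by (simp add: rdot_def sum_negf)

lemma rdot_real_vec_add: "rdot J f (real_vec (\<lambda>x. z x + w x)) = rdot J f (real_vec z) + rdot J f (real_vec w)"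
  by (simp add: rdot_def real_vec_def sum.distrib algebra_simps)

lemma rdot_real_vec_diff: "rdot J f (real_vec (\<lambda>x. z x - w x)) = rdot J f (real_vec z) - rdot J f (real_vec w)"
  by (simp add: rdot_def real_vec_def sum_subtractf algebra_simps)

lemma rdot_real_vec_sum:
  assumes "finite K"
  shows "rdot J f (real_vec (\<lambda>x. \<Sum>k\<in>K. c k * V k x)) = (\<Sum>k\<in>K. c k * rdot J f (real_vec (V k)))"
proof -
  have "rdot J f (real_vec (\<lambda>x. \<Sum>k\<in>K. c k * V k x)) = (\<Sum>i\<in>J. \<Sum>k\<in>K. f i * (of_int (c k) * of_int (V k i)))"
    unfolding rdot_def real_vec_def by (simp add: sum_distrib_left)
  also have "\<dots> = (\<Sum>k\<in>K. \<Sum>i\<in>J. f i * (of_int (c k) * of_int (V k i)))" by (rule sum.swap)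
  finally show ?thesis by (simp add: rdot_def real_vec_def sum_distrib_left mult.left_commute)
qed

lemma rdot_nonzero_left: "rdot J g v \<noteq> 0 \<Longrightarrow> \<exists>x\<in>J. g x \<noteq> 0"
  unfolding rdot_def by (metis (no_types, lifting) mult_zero_left sum.neutral)

lemma rdot_nonzero_right: "rdot J g v \<noteq> 0 \<Longrightarrow> \<exists>x\<in>J. v x \<noteq> 0"
  unfolding rdot_def by (metis (no_types, lifting) mult_zero_right sum.neutral)

lemma idot_lin: "idot J b (\<lambda>x. a * V x + c * W x) = a * idot J b V + c * idot J b W"
  by (simp add: idot_def sum.distrib sum_distrib_left algebra_simps)

lemma idot_add: "idot J b (\<lambda>x. z x + w x) = idot J b z + idot J b w"
  by (simp add: idot_def sum.distrib algebra_simps)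

lemma idot_diff_left: "idot J (\<lambda>x. f x - g x) v = idot J f v - idot J g v"
  by (simp add: idot_def sum_subtractf algebra_simps)

lemma real_vec_lin: "real_vec (\<lambda>x. a * V x + b * W x) = (\<lambda>x. real_of_int a * real_vec V x + real_of_int b * real_vec W x)"
  by (simp add: real_vec_def fun_eq_iff)

lemma sum_remove2:
  assumes "finite J" "i \<in> J" "j \<in> J" "i \<noteq> j"
  shows "(\<Sum>k\<in>J. f k) = f i + f j + (\<Sum>k\<in>J - {i, j}. f k)"
proof -
  have "(\<Sum>k\<in>J. f k) = f i + (\<Sum>k\<in>J - {i}. f k)" using assms by (simp add: sum.remove)
  also have "(\<Sum>k\<in>J - {i}. f k) = f j + (\<Sum>k\<in>J - {i} - {j}. f k)"
    using assms by (intro sum.remove) auto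
  finally show ?thesis by (simp add: Diff_insert2[symmetric] insert_commute add.assoc)
qed

lemma simplicial_cone_rdot_gen:
  "simplicial_cone J V L \<Longrightarrow> k \<in> J \<Longrightarrow> rdot J (L k) (real_vec (V k)) = 1"
  by (simp add: simplicial_cone_def)

lemma simplicial_cone_coords:
  "simplicial_cone J V L \<Longrightarrow> i \<in> J \<Longrightarrow> z i = (\<Sum>k\<in>J. rdot J (L k) z * real_vec (V k) i)"
  by (simp add: simplicial_cone_def)

text \<open>Stellar subdivision: replacing \<open>V i\<close> by the point \<open>\<alpha> V i + \<beta> V j\<close> of the edge between \<open>V i\<close>
  and \<open>V j\<close>, with the dual basis updated accordingly.\<close>

lemma simplicial_cone_stellar:
  assumes S: "simplicial_cone J V L" and J: "finite J" and ij: "i \<in> J" "j \<in> J" "i \<noteq> j"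
    and ab: "(\<alpha>::int) > 0" "(\<beta>::int) > 0"
  shows "simplicial_cone J (V(i := (\<lambda>x. \<alpha> * V i x + \<beta> * V j x)))
            (L(i := (\<lambda>x. L i x / \<alpha>), j := (\<lambda>x. L j x - (\<beta>/\<alpha>) * L i x)))"
proof -
  define w where "w = (\<lambda>x. \<alpha> * V i x + \<beta> * V j x)"
  define V' where "V' = V(i := w)"
  define L' where "L' = L(i := (\<lambda>x. L i x / \<alpha>), j := (\<lambda>x. L j x - (\<beta>/\<alpha>) * L i x))"
  have supp: "\<forall>k\<in>J. supp_on J (V k)"
    and dual: "\<forall>k\<in>J. \<forall>l\<in>J. rdot J (L k) (real_vec (V l)) = (if k = l then 1 else 0)"
    and coords: "\<forall>z. \<forall>x\<in>J. z x = (\<Sum>k\<in>J. rdot J (L k) z * real_vec (V k) x)"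
    using S by (auto simp: simplicial_cone_def)
  have rdot_w: "rdot J f (real_vec w) = \<alpha> * rdot J f (real_vec (V i)) + \<beta> * rdot J f (real_vec (V j))" for f
    unfolding w_def real_vec_lin rdot_lin_right ..
  have \<alpha>0: "real_of_int \<alpha> \<noteq> 0" using ab by simp
  have L'i: "rdot J (L' i) v = rdot J (L i) v / \<alpha>" for v
    using ij by (simp add: L'_def rdot_divide_left)
  have L'j: "rdot J (L' j) v = rdot J (L j) v - (\<beta>/\<alpha>) * rdot J (L i) v" for v
    using ij rdot_diff_left[of J "L j" "\<beta>/\<alpha>" "L i" v] by (simp add: L'_def)
  have L'k: "k \<noteq> i \<Longrightarrow> k \<noteq> j \<Longrightarrow> rdot J (L' k) v = rdot J (L k) v" for k v
    by (simp add: L'_def)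
  have supp': "\<forall>k\<in>J. supp_on J (V' k)"
    using supp ij by (auto simp: V'_def w_def supp_on_def)
  have dual': "rdot J (L' k) (real_vec (V' l)) = (if k = l then 1 else 0)" if kl: "k \<in> J" "l \<in> J" for k l
    using kl dual ij \<alpha>0
    by (cases "k = i"; cases "k = j"; cases "l = i") (auto simp: L'i L'j L'k V'_def rdot_w field_simps)
  have coords': "z x = (\<Sum>k\<in>J. rdot J (L' k) z * real_vec (V' k) x)" if x: "x \<in> J" for z x
  proof -
    have "(\<Sum>k\<in>J. rdot J (L' k) z * real_vec (V' k) x) =
        rdot J (L' i) z * real_vec (V' i) x + rdot J (L' j) z * real_vec (V' j) x +
        (\<Sum>k\<in>J-{i,j}. rdot J (L' k) z * real_vec (V' k) x)"
      by (rule sum_remove2[OF J ij])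
    also have "(\<Sum>k\<in>J-{i,j}. rdot J (L' k) z * real_vec (V' k) x) = (\<Sum>k\<in>J-{i,j}. rdot J (L k) z * real_vec (V k) x)"
      by (intro sum.cong refl) (auto simp: L'k V'_def)
    also have "rdot J (L' i) z * real_vec (V' i) x + rdot J (L' j) z * real_vec (V' j) x =
        rdot J (L i) z * real_vec (V i) x + rdot J (L j) z * real_vec (V j) x"
      using ij \<alpha>0 by (simp add: L'i L'j V'_def w_def real_vec_def field_simps)
    also have "\<dots> + (\<Sum>k\<in>J-{i,j}. rdot J (L k) z * real_vec (V k) x) = (\<Sum>k\<in>J. rdot J (L k) z * real_vec (V k) x)"
      by (rule sum_remove2[OF J ij, symmetric])
    finally show ?thesis using coords x by simp
  qed
  show ?thesis
    unfolding simplicial_cone_def using supp' dual' coords' by (auto simp: V'_def L'_def w_def)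
qed

text \<open>Half-open cones (Koeppe and Verdoolaege): a generic vector \<open>q\<close> decides for each facet whether it
  belongs to the cone, namely the facet \<open>L k = 0\<close> is included iff \<open>L k q > 0\<close>.\<close>

definition lex_pos :: "real \<Rightarrow> real \<Rightarrow> bool" where
  "lex_pos a b \<longleftrightarrow> 0 < a \<or> (a = 0 \<and> 0 < b)"

definition in_half_open :: "nat set \<Rightarrow> (nat \<Rightarrow> nat \<Rightarrow> real) \<Rightarrow> (nat \<Rightarrow> real) \<Rightarrow> (nat \<Rightarrow> int) \<Rightarrow> bool" where
  "in_half_open J L q z \<longleftrightarrow> supp_on J z \<and> (\<forall>k\<in>J. lex_pos (rdot J (L k) (real_vec z)) (rdot J (L k) q))"

lemma lex_pos_scale: "c > 0 \<Longrightarrow> lex_pos (c * a) (c * b) \<longleftrightarrow> lex_pos a b"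
  by (auto simp: lex_pos_def zero_less_mult_iff)

lemma lex_pos_divide: "c > 0 \<Longrightarrow> lex_pos (a / c) (b / c) \<longleftrightarrow> lex_pos a b"
  by (auto simp: lex_pos_def zero_less_divide_iff)

lemma lex_pos_add: "lex_pos a b \<Longrightarrow> lex_pos c d \<Longrightarrow> lex_pos (a + c) (b + d)"
  by (auto simp: lex_pos_def)

lemma lex_pos_antisym: "lex_pos a b \<Longrightarrow> lex_pos (-a) (-b) \<Longrightarrow> False"
  by (auto simp: lex_pos_def)

lemma lex_pos_cases: "b \<noteq> 0 \<Longrightarrow> lex_pos a b \<or> lex_pos (-a) (-b)"
  by (auto simp: lex_pos_def)

lemma lex_pos_split:
  assumes c: "c > 0" and e: "b' - c * a' \<noteq> 0"
  shows "(lex_pos a a' \<and> lex_pos b b') \<longleftrightarrow> (lex_pos a a' \<and> lex_pos (b - c * a) (b' - c * a')) \<or>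
            (lex_pos b b' \<and> lex_pos (a - (1/c) * b) (a' - (1/c) * b'))"
    and "\<not> (lex_pos (b - c * a) (b' - c * a') \<and> lex_pos (a - (1/c) * b) (a' - (1/c) * b'))"
proof -
  have r: "a - (1/c) * b = (1/c) * (-(b - c * a))" "a' - (1/c) * b' = (1/c) * (-(b' - c * a'))"
    using c by (auto simp: field_simps)
  have r3: "a = (1/c) * (b + (-(b - c * a)))" "a' = (1/c) * (b' + (-(b' - c * a')))"
    using c by (auto simp: field_simps)
  have ic: "1/c > 0" using c by auto
  show "\<not> (lex_pos (b - c * a) (b' - c * a') \<and> lex_pos (a - (1/c) * b) (a' - (1/c) * b'))"
    unfolding r lex_pos_scale[OF ic] using lex_pos_antisym by blast
  have "lex_pos (b - c * a) (b' - c * a') \<or> lex_pos (a - 1 / c * b) (a' - 1 / c * b')"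
    unfolding r lex_pos_scale[OF ic] using lex_pos_cases[OF e] by blast
  moreover have "lex_pos b b'" if "lex_pos a a'" "lex_pos (b - c * a) (b' - c * a')"
    using that lex_pos_add[of "b - c * a" "b' - c * a'" "c * a" "c * a'"] lex_pos_scale[OF c] by simp
  moreover have "lex_pos a a'" if "lex_pos b b'" "lex_pos (a - 1 / c * b) (a' - 1 / c * b')"
    using that unfolding r lex_pos_scale[OF ic]
    using lex_pos_add[of b b' "-(b - c * a)" "-(b' - c * a')"] r3 lex_pos_scale[OF ic] lex_pos_scale[OF c] by simp
  ultimately show "(lex_pos a a' \<and> lex_pos b b') \<longleftrightarrow> (lex_pos a a' \<and> lex_pos (b - c * a) (b' - c * a')) \<or>
            (lex_pos b b' \<and> lex_pos (a - (1/c) * b) (a' - (1/c) * b'))"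
    by blast
qed

lemma in_half_open_fun_upd2:
  assumes "i \<in> J" "j \<in> J" "i \<noteq> j"
  shows "in_half_open J (L(i := f, j := g)) q z \<longleftrightarrow>
    lex_pos (rdot J f (real_vec z)) (rdot J f q) \<and> lex_pos (rdot J g (real_vec z)) (rdot J g q) \<and>
    supp_on J z \<and> (\<forall>k\<in>J - {i, j}. lex_pos (rdot J (L k) (real_vec z)) (rdot J (L k) q))"
proof -
  have "(\<forall>k\<in>J. P k) \<longleftrightarrow> P i \<and> P j \<and> (\<forall>k\<in>J - {i, j}. P k)" for P using assms by auto
  then show ?thesis using assms(3) unfolding in_half_open_def by auto
qed

lemma in_half_open_stellar_split:
  assumes ij: "i \<in> J" "j \<in> J" "i \<noteq> j" and ab: "(\<alpha>::int) > 0" "(\<beta>::int) > 0"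
    and generic: "rdot J (\<lambda>x. L j x - (\<beta>/\<alpha>) * L i x) q \<noteq> 0"
  defines "L1 \<equiv> L(i := (\<lambda>x. L i x / \<alpha>), j := (\<lambda>x. L j x - (\<beta>/\<alpha>) * L i x))"
    and "L2 \<equiv> L(j := (\<lambda>x. L j x / \<beta>), i := (\<lambda>x. L i x - (\<alpha>/\<beta>) * L j x))"
  shows "in_half_open J L q z \<longleftrightarrow> in_half_open J L1 q z \<or> in_half_open J L2 q z"
    and "\<not> (in_half_open J L1 q z \<and> in_half_open J L2 q z)"
proof -
  define c where "c = real_of_int \<beta> / real_of_int \<alpha>"
  have c: "c > 0" "1 / c = real_of_int \<alpha> / real_of_int \<beta>" using ab by (simp_all add: c_def)
  have \<alpha>\<beta>: "real_of_int \<alpha> > 0" "real_of_int \<beta> > 0" using ab by auto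
  define a where "a = rdot J (L i) (real_vec z)"
  define a' where "a' = rdot J (L i) q"
  define b where "b = rdot J (L j) (real_vec z)"
  define b' where "b' = rdot J (L j) q"
  have e: "b' - c * a' \<noteq> 0" using generic rdot_diff_left[of J "L j" "\<beta>/\<alpha>" "L i" q]
    by (simp add: b'_def a'_def c_def)
  have L2_eq: "L2 = L(i := (\<lambda>x. L i x - (\<alpha>/\<beta>) * L j x), j := (\<lambda>x. L j x / \<beta>))"
    unfolding L2_def using ij(3) by (simp add: fun_upd_twist)
  define rest where "rest \<longleftrightarrow> supp_on J z \<and> (\<forall>k\<in>J - {i, j}. lex_pos (rdot J (L k) (real_vec z)) (rdot J (L k) q))"
  have "in_half_open J L q z \<longleftrightarrow> lex_pos a a' \<and> lex_pos b b' \<and> rest"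
    using in_half_open_fun_upd2[OF ij, of L "L i" "L j" q z] by (simp add: a_def a'_def b_def b'_def rest_def)
  moreover have "in_half_open J L1 q z \<longleftrightarrow> lex_pos a a' \<and> lex_pos (b - c * a) (b' - c * a') \<and> rest"
    unfolding L1_def in_half_open_fun_upd2[OF ij] using \<alpha>\<beta> rdot_diff_left[of J "L j" "\<beta>/\<alpha>" "L i"]
    by (simp add: rdot_divide_left lex_pos_divide a_def a'_def b_def b'_def c_def rest_def)
  moreover have "in_half_open J L2 q z \<longleftrightarrow> lex_pos (a - (1/c) * b) (a' - (1/c) * b') \<and> lex_pos b b' \<and> rest"
    unfolding L2_eq in_half_open_fun_upd2[OF ij] using \<alpha>\<beta> c(2) rdot_diff_left[of J "L i" "\<alpha>/\<beta>" "L j"]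
    by (simp add: rdot_divide_left lex_pos_divide a_def a'_def b_def b'_def rest_def)
  ultimately show "in_half_open J L q z \<longleftrightarrow> in_half_open J L1 q z \<or> in_half_open J L2 q z"
    and "\<not> (in_half_open J L1 q z \<and> in_half_open J L2 q z)"
    using lex_pos_split[OF c(1) e] by blast+
qed
type_synonym cone_data = "(nat \<Rightarrow> nat \<Rightarrow> int) \<times> (nat \<Rightarrow> nat \<Rightarrow> real)"

definition cover_count :: "nat set \<Rightarrow> (nat \<Rightarrow> real) \<Rightarrow> (nat \<Rightarrow> int) \<Rightarrow> cone_data list \<Rightarrow> nat" where
  "cover_count J q z Ts = length (filter (\<lambda>T. in_half_open J (snd T) q z) Ts)"

text \<open>\<open>Ts\<close> decomposes the half-open cone with facet functionals \<open>L\<close> for every tie-breaking vector \<open>q\<close>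
  off the finitely many walls \<open>G\<close>.\<close>

definition half_open_decomp ::
    "nat set \<Rightarrow> (nat \<Rightarrow> nat \<Rightarrow> real) \<Rightarrow> cone_data list \<Rightarrow> (nat \<Rightarrow> real) set \<Rightarrow> bool" where
  "half_open_decomp J L Ts G \<longleftrightarrow> finite G \<and> (\<forall>g\<in>G. \<exists>x\<in>J. g x \<noteq> 0) \<and>
    (\<forall>T\<in>set Ts. simplicial_cone J (fst T) (snd T)) \<and>
    (\<forall>q. (\<forall>g\<in>G. rdot J g q \<noteq> 0) \<longrightarrow> (\<forall>z. cover_count J q z Ts = (if in_half_open J L q z then 1 else 0)))"

definition nonneg_gens :: "nat set \<Rightarrow> (nat \<Rightarrow> nat \<Rightarrow> int) \<Rightarrow> bool" where
  "nonneg_gens J V \<longleftrightarrow> (\<forall>k\<in>J. \<forall>x. V k x \<ge> 0)"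

definition one_sided :: "nat set \<Rightarrow> (nat \<Rightarrow> int) \<Rightarrow> (nat \<Rightarrow> nat \<Rightarrow> int) \<Rightarrow> bool" where
  "one_sided J b V \<longleftrightarrow> (\<forall>k\<in>J. idot J b (V k) \<ge> 0) \<or> (\<forall>k\<in>J. idot J b (V k) \<le> 0)"

lemma cover_count_append: "cover_count J q z (A @ B) = cover_count J q z A + cover_count J q z B"
  by (simp add: cover_count_def)

lemma cover_count_Cons:
  "cover_count J q z (T # B) = (if in_half_open J (snd T) q z then 1 else 0) + cover_count J q z B"
  by (simp add: cover_count_def)

lemma half_open_decomp_single: "simplicial_cone J V L \<Longrightarrow> half_open_decomp J L [(V, L)] {}"
  by (simp add: half_open_decomp_def cover_count_def)

lemma half_open_decomp_stellar:
  assumes S: "simplicial_cone J V L" and J: "finite J" and ij: "i \<in> J" "j \<in> J" "i \<noteq> j"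
    and ab: "(\<alpha>::int) > 0" "(\<beta>::int) > 0"
  defines "L1 \<equiv> L(i := (\<lambda>x. L i x / \<alpha>), j := (\<lambda>x. L j x - (\<beta>/\<alpha>) * L i x))"
    and "L2 \<equiv> L(j := (\<lambda>x. L j x / \<beta>), i := (\<lambda>x. L i x - (\<alpha>/\<beta>) * L j x))"
  assumes D1: "half_open_decomp J L1 Ts1 G1" and D2: "half_open_decomp J L2 Ts2 G2"
  shows "half_open_decomp J L (Ts1 @ Ts2) (insert (L1 j) (G1 \<union> G2))"
  unfolding half_open_decomp_def
proof (intro conjI allI impI)
  have "simplicial_cone J (V(i := (\<lambda>x. \<alpha> * V i x + \<beta> * V j x))) L1"
    unfolding L1_def by (rule simplicial_cone_stellar[OF S J ij ab])
  then have "rdot J (L1 j) (real_vec (V j)) \<noteq> 0"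
    using ij simplicial_cone_rdot_gen by fastforce
  then show "\<forall>g\<in>insert (L1 j) (G1 \<union> G2). \<exists>x\<in>J. g x \<noteq> 0"
    using D1 D2 rdot_nonzero_left by (auto simp: half_open_decomp_def)
  show "finite (insert (L1 j) (G1 \<union> G2))" "\<forall>T\<in>set (Ts1 @ Ts2). simplicial_cone J (fst T) (snd T)"
    using D1 D2 by (auto simp: half_open_decomp_def)
  fix q z assume q: "\<forall>g\<in>insert (L1 j) (G1 \<union> G2). rdot J g q \<noteq> 0"
  have "cover_count J q z Ts1 = (if in_half_open J L1 q z then 1 else 0)"
    "cover_count J q z Ts2 = (if in_half_open J L2 q z then 1 else 0)"
    using D1 D2 q unfolding half_open_decomp_def by blast+
  moreover have "rdot J (\<lambda>x. L j x - (\<beta>/\<alpha>) * L i x) q \<noteq> 0"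
    using q ij by (simp add: L1_def)
  note split = in_half_open_stellar_split[OF ij ab this, of z, folded L1_def L2_def]
  ultimately show "cover_count J q z (Ts1 @ Ts2) = (if in_half_open J L q z then 1 else 0)"
    unfolding cover_count_append using split by auto
qed

lemma nonneg_gens_stellar:
  assumes "nonneg_gens J V" "i \<in> J" "j \<in> J" "(\<alpha>::int) \<ge> 0" "(\<beta>::int) \<ge> 0"
  shows "nonneg_gens J (V(m := (\<lambda>x. \<alpha> * V i x + \<beta> * V j x)))"
  using assms by (auto simp: nonneg_gens_def)

lemma one_sided_stellar:
  assumes "one_sided J b V" "i \<in> J" "j \<in> J" "(\<alpha>::int) \<ge> 0" "(\<beta>::int) \<ge> 0"
  shows "one_sided J b (V(m := (\<lambda>x. \<alpha> * V i x + \<beta> * V j x)))"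
proof -
  have e: "idot J b (\<lambda>x. \<alpha> * V i x + \<beta> * V j x) = \<alpha> * idot J b (V i) + \<beta> * idot J b (V j)"
    by (rule idot_lin)
  show ?thesis
  proof (cases "\<forall>k\<in>J. idot J b (V k) \<ge> 0")
    case True
    then have "idot J b (\<lambda>x. \<alpha> * V i x + \<beta> * V j x) \<ge> 0"
      unfolding e using assms by (intro add_nonneg_nonneg mult_nonneg_nonneg) auto
    then show ?thesis using True by (simp add: one_sided_def)
  next
    case False
    then have le: "\<forall>k\<in>J. idot J b (V k) \<le> 0" using assms(1) by (auto simp: one_sided_def)
    then have "idot J b (\<lambda>x. \<alpha> * V i x + \<beta> * V j x) \<le> 0"
      unfolding e using assms by (intro add_nonpos_nonpos mult_nonneg_nonpos) auto
    then show ?thesis using le by (simp add: one_sided_def)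
  qed
qed

lemma card_off_hyperplane_upd:
  assumes "finite J" "m \<in> J" "idot J b (V m) \<noteq> 0" "idot J b w = 0"
  shows "card {k\<in>J. idot J b ((V(m := w)) k) \<noteq> 0} < card {k\<in>J. idot J b (V k) \<noteq> 0}"
proof -
  have "{k\<in>J. idot J b ((V(m := w)) k) \<noteq> 0} = {k\<in>J. idot J b (V k) \<noteq> 0} - {m}"
    using assms(4) by auto
  then show ?thesis using card_Diff1_less[of "{k\<in>J. idot J b (V k) \<noteq> 0}" m] assms by simp
qed

text \<open>Stellar subdivision at the point of the edge \<open>[V i, V j]\<close> on the hyperplane \<open>b = 0\<close> removes
  one generator off that hyperplane from each of the two new cones.\<close>

lemma one_sided_refinement:
  assumes J: "finite J"
  shows "simplicial_cone J V L \<Longrightarrow> nonneg_gens J V \<Longrightarrow> (\<forall>b'\<in>set B. one_sided J b' V) \<Longrightarrow>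
    \<exists>Ts G. half_open_decomp J L Ts G \<and>
      (\<forall>T\<in>set Ts. nonneg_gens J (fst T) \<and> (\<forall>b'\<in>set (b # B). one_sided J b' (fst T)))"
proof (induction "card {k\<in>J. idot J b (V k) \<noteq> 0}" arbitrary: V L rule: less_induct)
  case less
  show ?case
  proof (cases "one_sided J b V")
    case True
    then show ?thesis
      using less.prems half_open_decomp_single[of J V L] by (intro exI[of _ "[(V, L)]"] exI[of _ "{}"]) auto
  next
    case False
    then obtain i j where ij: "i \<in> J" "j \<in> J" "idot J b (V i) > 0" "idot J b (V j) < 0"
      unfolding one_sided_def by (auto simp: not_le)
    then have i_ne_j: "i \<noteq> j" and off: "idot J b (V i) \<noteq> 0" "idot J b (V j) \<noteq> 0" by auto
    define \<alpha> where "\<alpha> = - idot J b (V j)"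
    define \<beta> where "\<beta> = idot J b (V i)"
    have \<alpha>\<beta>: "\<alpha> > 0" "\<beta> > 0" using ij by (auto simp: \<alpha>_def \<beta>_def)
    define w where "w = (\<lambda>x. \<alpha> * V i x + \<beta> * V j x)"
    have w': "w = (\<lambda>x. \<beta> * V j x + \<alpha> * V i x)" by (simp add: w_def fun_eq_iff add.commute)
    have b_w: "idot J b w = 0" unfolding w_def idot_lin by (simp add: \<alpha>_def \<beta>_def)
    define L1 where "L1 = L(i := (\<lambda>x. L i x / \<alpha>), j := (\<lambda>x. L j x - (\<beta>/\<alpha>) * L i x))"
    define L2 where "L2 = L(j := (\<lambda>x. L j x / \<beta>), i := (\<lambda>x. L i x - (\<alpha>/\<beta>) * L j x))"
    have "simplicial_cone J (V(i := w)) L1" unfolding L1_def w_def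
      by (rule simplicial_cone_stellar[OF less.prems(1) J ij(1,2) i_ne_j \<alpha>\<beta>])
    moreover have "nonneg_gens J (V(i := w))" "\<forall>b'\<in>set B. one_sided J b' (V(i := w))"
      unfolding w_def using less.prems(2,3) ij \<alpha>\<beta>
      by (auto intro!: nonneg_gens_stellar one_sided_stellar)
    ultimately obtain Ts1 G1 where T1: "half_open_decomp J L1 Ts1 G1"
      "\<forall>T\<in>set Ts1. nonneg_gens J (fst T) \<and> (\<forall>b'\<in>set (b # B). one_sided J b' (fst T))"
      using less.hyps[OF card_off_hyperplane_upd[where V=V, OF J ij(1) off(1) b_w]] by blast
    have "simplicial_cone J (V(j := w)) L2" unfolding L2_def w'
      by (rule simplicial_cone_stellar[OF less.prems(1) J ij(2,1) i_ne_j[symmetric] \<alpha>\<beta>(2,1)])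
    moreover have "nonneg_gens J (V(j := w))" "\<forall>b'\<in>set B. one_sided J b' (V(j := w))"
      unfolding w_def using less.prems(2,3) ij \<alpha>\<beta>
      by (auto intro!: nonneg_gens_stellar one_sided_stellar)
    ultimately obtain Ts2 G2 where T2: "half_open_decomp J L2 Ts2 G2"
      "\<forall>T\<in>set Ts2. nonneg_gens J (fst T) \<and> (\<forall>b'\<in>set (b # B). one_sided J b' (fst T))"
      using less.hyps[OF card_off_hyperplane_upd[where V=V, OF J ij(2) off(2) b_w]] by blast
    have "half_open_decomp J L (Ts1 @ Ts2) (insert (L1 j) (G1 \<union> G2))"
      using half_open_decomp_stellar[OF less.prems(1) J ij(1,2) i_ne_j \<alpha>\<beta>] T1(1) T2(1)
      unfolding L1_def L2_def by blast
    moreover have "\<forall>T\<in>set (Ts1 @ Ts2). nonneg_gens J (fst T) \<and> (\<forall>b'\<in>set (b # B). one_sided J b' (fst T))"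
      using T1(2) T2(2) by auto
    ultimately show ?thesis by blast
  qed
qed

lemma half_open_refine_list:
  assumes "\<forall>T\<in>set Ts. \<exists>Us H. half_open_decomp J (snd T) Us H \<and> (\<forall>U\<in>set Us. R U)"
  shows "\<exists>Us H. finite H \<and> (\<forall>g\<in>H. \<exists>x\<in>J. g x \<noteq> 0) \<and> (\<forall>U\<in>set Us. simplicial_cone J (fst U) (snd U) \<and> R U) \<and>
    (\<forall>q. (\<forall>g\<in>H. rdot J g q \<noteq> 0) \<longrightarrow> (\<forall>z. cover_count J q z Us = cover_count J q z Ts))"
  using assms
proof (induction Ts)
  case Nil
  then show ?case by (intro exI[of _ "[]"] exI[of _ "{}"]) (auto simp: cover_count_def)
next
  case (Cons T Ts)
  obtain Us H where UH: "finite H" "\<forall>g\<in>H. \<exists>x\<in>J. g x \<noteq> 0" "\<forall>U\<in>set Us. simplicial_cone J (fst U) (snd U) \<and> R U"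
    "\<forall>q. (\<forall>g\<in>H. rdot J g q \<noteq> 0) \<longrightarrow> (\<forall>z. cover_count J q z Us = cover_count J q z Ts)"
    using Cons by auto
  obtain Us1 H1 where U1: "half_open_decomp J (snd T) Us1 H1" "\<forall>U\<in>set Us1. R U" using Cons.prems by auto
  show ?case
  proof (intro exI[of _ "Us1 @ Us"] exI[of _ "H1 \<union> H"] conjI allI impI)
    show "finite (H1 \<union> H)" "\<forall>g\<in>H1 \<union> H. \<exists>x\<in>J. g x \<noteq> 0"
      "\<forall>U\<in>set (Us1 @ Us). simplicial_cone J (fst U) (snd U) \<and> R U"
      using UH U1 by (auto simp: half_open_decomp_def)
    fix q z assume q: "\<forall>g\<in>H1 \<union> H. rdot J g q \<noteq> 0"
    then have "cover_count J q z Us1 = (if in_half_open J (snd T) q z then 1 else 0)"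
      using U1(1) unfolding half_open_decomp_def by blast
    moreover have "cover_count J q z Us = cover_count J q z Ts" using UH(4) q by blast
    ultimately show "cover_count J q z (Us1 @ Us) = cover_count J q z (T # Ts)"
      unfolding cover_count_append cover_count_Cons by simp
  qed
qed

lemma half_open_decomp_refine:
  assumes D: "half_open_decomp J L Ts G"
    and refine: "\<forall>T\<in>set Ts. \<exists>Us H. half_open_decomp J (snd T) Us H \<and> (\<forall>U\<in>set Us. R U)"
  shows "\<exists>Us H. half_open_decomp J L Us H \<and> (\<forall>U\<in>set Us. R U)"
proof -
  obtain Us H where UH: "finite H" "\<forall>g\<in>H. \<exists>x\<in>J. g x \<noteq> 0" "\<forall>U\<in>set Us. simplicial_cone J (fst U) (snd U) \<and> R U"
    "\<forall>q. (\<forall>g\<in>H. rdot J g q \<noteq> 0) \<longrightarrow> (\<forall>z. cover_count J q z Us = cover_count J q z Ts)"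
    using half_open_refine_list[OF refine] by blast
  have "half_open_decomp J L Us (G \<union> H)"
    using D UH unfolding half_open_decomp_def by (metis Un_iff finite_UnI)
  then show ?thesis using UH by blast
qed

lemma one_sided_refinement_all:
  assumes J: "finite J" and S: "simplicial_cone J V L" "nonneg_gens J V"
  shows "\<exists>Ts G. half_open_decomp J L Ts G \<and>
    (\<forall>T\<in>set Ts. nonneg_gens J (fst T) \<and> (\<forall>b\<in>set B. one_sided J b (fst T)))"
proof (induction B)
  case Nil
  then show ?case
    using half_open_decomp_single[OF S(1)] S by (intro exI[of _ "[(V, L)]"] exI[of _ "{}"]) auto
next
  case (Cons b B)
  then obtain Ts G where TG: "half_open_decomp J L Ts G"
    "\<forall>T\<in>set Ts. nonneg_gens J (fst T) \<and> (\<forall>b\<in>set B. one_sided J b (fst T))"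
    by blast
  have "\<forall>T\<in>set Ts. \<exists>Us H. half_open_decomp J (snd T) Us H \<and>
      (\<forall>U\<in>set Us. nonneg_gens J (fst U) \<and> (\<forall>b'\<in>set (b # B). one_sided J b' (fst U)))"
  proof
    fix T assume T: "T \<in> set Ts"
    then have "simplicial_cone J (fst T) (snd T)" using TG(1) by (auto simp: half_open_decomp_def)
    then show "\<exists>Us H. half_open_decomp J (snd T) Us H \<and>
        (\<forall>U\<in>set Us. nonneg_gens J (fst U) \<and> (\<forall>b'\<in>set (b # B). one_sided J b' (fst U)))"
      using one_sided_refinement[OF J, of "fst T" "snd T" B b] TG(2) T by auto
  qed
  then show ?case using half_open_decomp_refine[OF TG(1)] by blast
qed
definition half_open_cone :: "nat set \<Rightarrow> (nat \<Rightarrow> nat \<Rightarrow> real) \<Rightarrow> nat set \<Rightarrow> (nat \<Rightarrow> int) set" where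
  "half_open_cone J L Op = {z. supp_on J z \<and>
     (\<forall>k\<in>J. if k \<in> Op then rdot J (L k) (real_vec z) > 0 else rdot J (L k) (real_vec z) \<ge> 0)}"

definition fund_par :: "nat set \<Rightarrow> (nat \<Rightarrow> nat \<Rightarrow> real) \<Rightarrow> nat set \<Rightarrow> (nat \<Rightarrow> int) set" where
  "fund_par J L Op = {p. supp_on J p \<and>
     (\<forall>k\<in>J. if k \<in> Op then 0 < rdot J (L k) (real_vec p) \<and> rdot J (L k) (real_vec p) \<le> 1
            else 0 \<le> rdot J (L k) (real_vec p) \<and> rdot J (L k) (real_vec p) < 1)}"

definition gen_comb :: "nat set \<Rightarrow> (nat \<Rightarrow> nat \<Rightarrow> int) \<Rightarrow> (nat \<Rightarrow> int) \<Rightarrow> nat \<Rightarrow> int" where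
  "gen_comb J V c = (\<lambda>x. \<Sum>k\<in>J. c k * V k x)"

definition lattice_char :: "((nat \<Rightarrow> int) \<Rightarrow> complex) \<Rightarrow> bool" where
  "lattice_char ch \<longleftrightarrow> (\<forall>z w. ch (\<lambda>x. z x + w x) = ch z * ch w) \<and> ch (\<lambda>x. 0) = 1"

lemma lattice_char_sum:
  assumes "lattice_char ch" "finite K"
  shows "ch (\<lambda>x. \<Sum>k\<in>K. f k x) = (\<Prod>k\<in>K. ch (f k))"
  using assms(2) by induction (use assms(1) in \<open>simp_all add: lattice_char_def\<close>)

lemma lattice_char_power:
  assumes "lattice_char ch"
  shows "ch (\<lambda>x. int n * v x) = ch v ^ n"
proof (induction n)
  case (Suc n)
  have "ch (\<lambda>x. int (Suc n) * v x) = ch (\<lambda>x. v x + int n * v x)" by (simp add: algebra_simps)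
  also have "\<dots> = ch v * ch (\<lambda>x. int n * v x)" using assms by (simp add: lattice_char_def)
  finally show ?case using Suc by simp
qed (use assms in \<open>simp add: lattice_char_def\<close>)

lemma lattice_char_add: "lattice_char ch \<Longrightarrow> ch (\<lambda>x. z x + w x) = ch z * ch w"
  by (simp add: lattice_char_def)

lemma lattice_char_nonzero:
  assumes "lattice_char ch"
  shows "ch z \<noteq> 0"
proof -
  have "ch z * ch (\<lambda>x. - z x) = ch (\<lambda>x. 0)"
    using lattice_char_add[OF assms, of z "\<lambda>x. - z x"] by simp
  then show ?thesis using assms by (auto simp: lattice_char_def)
qed

lemma lattice_char_diff:
  assumes "lattice_char ch"
  shows "ch (\<lambda>x. z x - w x) = ch z / ch w"
proof -
  have "ch (\<lambda>x. z x - w x) * ch w = ch z"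
    using lattice_char_add[OF assms, of "\<lambda>x. z x - w x" w] by simp
  then show ?thesis using lattice_char_nonzero[OF assms] by (simp add: field_simps)
qed

lemma lattice_char_inverse: "lattice_char ch \<Longrightarrow> lattice_char (\<lambda>z. inverse (ch z))"
  by (simp add: lattice_char_def)

lemma lattice_char_gen_comb:
  assumes "lattice_char ch" "finite J"
  shows "ch (gen_comb J V (\<lambda>k. int (m k))) = (\<Prod>k\<in>J. ch (V k) ^ m k)"
  unfolding gen_comb_def by (simp add: lattice_char_sum[OF assms] lattice_char_power[OF assms(1)])

lemma simplicial_cone_rdot_gen_comb:
  assumes "simplicial_cone J V L" "finite J" "j \<in> J"
  shows "rdot J (L j) (real_vec (gen_comb J V c)) = c j"
proof -
  have "rdot J (L j) (real_vec (gen_comb J V c)) = (\<Sum>k\<in>J. c k * rdot J (L j) (real_vec (V k)))"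
    unfolding gen_comb_def by (rule rdot_real_vec_sum[OF assms(2)])
  also have "\<dots> = (\<Sum>k\<in>J. if k = j then of_int (c k) else 0)"
    using assms(1,3) by (intro sum.cong refl) (auto simp: simplicial_cone_def)
  finally show ?thesis using assms(2,3) by simp
qed

lemma supp_on_gen_comb: "simplicial_cone J V L \<Longrightarrow> supp_on J (gen_comb J V c)"
  by (auto simp: simplicial_cone_def supp_on_def gen_comb_def intro!: sum.neutral)

lemma finite_box:
  assumes "finite J"
  shows "finite {p :: nat \<Rightarrow> int. supp_on J p \<and> (\<forall>x\<in>J. \<bar>p x\<bar> \<le> B x)}"
proof -
  have "{p :: nat \<Rightarrow> int. supp_on J p \<and> (\<forall>x\<in>J. \<bar>p x\<bar> \<le> B x)} \<subseteq>
      (\<lambda>f x. if x \<in> J then f x else 0) ` PiE J (\<lambda>x. {-B x..B x})"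
  proof
    fix p assume p: "p \<in> {p :: nat \<Rightarrow> int. supp_on J p \<and> (\<forall>x\<in>J. \<bar>p x\<bar> \<le> B x)}"
    show "p \<in> (\<lambda>f x. if x \<in> J then f x else 0) ` PiE J (\<lambda>x. {-B x..B x})"
    proof (rule image_eqI[of _ _ "restrict p J"])
      show "p = (\<lambda>x. if x \<in> J then restrict p J x else 0)"
        using p by (auto simp: supp_on_def fun_eq_iff)
      show "restrict p J \<in> PiE J (\<lambda>x. {-B x..B x})" using p by (auto simp: abs_le_iff)
    qed
  qed
  moreover have "finite (PiE J (\<lambda>x. {-B x..B x}))" using assms by (intro finite_PiE) auto
  ultimately show ?thesis by (rule finite_subset[OF _ finite_imageI])
qed

lemma finite_fund_par:
  assumes S: "simplicial_cone J V L" and J: "finite J"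
  shows "finite (fund_par J L Op)"
proof -
  define B where "B x = (\<Sum>k\<in>J. \<bar>V k x\<bar>)" for x
  have "\<bar>p x\<bar> \<le> B x" if p: "p \<in> fund_par J L Op" and x: "x \<in> J" for p x
  proof -
    have coord: "0 \<le> rdot J (L k) (real_vec p) \<and> rdot J (L k) (real_vec p) \<le> 1" if "k \<in> J" for k
      using p that by (auto simp: fund_par_def split: if_splits)
    have "\<bar>real_vec p x\<bar> \<le> (\<Sum>k\<in>J. \<bar>rdot J (L k) (real_vec p) * real_vec (V k) x\<bar>)"
      unfolding simplicial_cone_coords[OF S x, of "real_vec p"] by (rule sum_abs)
    also have "\<dots> \<le> (\<Sum>k\<in>J. \<bar>real_vec (V k) x\<bar>)"
      using coord by (intro sum_mono) (simp add: abs_mult mult_left_le_one_le)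
    finally show ?thesis by (simp add: B_def real_vec_def flip: of_int_abs of_int_sum)
  qed
  then have "fund_par J L Op \<subseteq> {p. supp_on J p \<and> (\<forall>x\<in>J. \<bar>p x\<bar> \<le> B x)}"
    by (auto simp: fund_par_def)
  then show ?thesis using finite_box[OF J, of B] by (rule finite_subset)
qed

lemma fund_par_translate_mem:
  assumes S: "simplicial_cone J V L" and J: "finite J" and p: "p \<in> fund_par J L Op"
  shows "(\<lambda>x. p x + gen_comb J V (\<lambda>k. int (m k)) x) \<in> half_open_cone J L Op"
proof -
  have coord: "rdot J (L k) (real_vec (\<lambda>x. p x + gen_comb J V (\<lambda>k. int (m k)) x)) =
      rdot J (L k) (real_vec p) + real (m k)" if "k \<in> J" for k
    unfolding rdot_real_vec_add simplicial_cone_rdot_gen_comb[OF S J that] by simp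
  have "supp_on J (\<lambda>x. p x + gen_comb J V (\<lambda>k. int (m k)) x)"
    using p supp_on_gen_comb[OF S, of "\<lambda>k. int (m k)"] by (simp add: fund_par_def supp_on_def)
  moreover have "if k \<in> Op then rdot J (L k) (real_vec p) + real (m k) > 0
      else rdot J (L k) (real_vec p) + real (m k) \<ge> 0" if "k \<in> J" for k
    using p that unfolding fund_par_def by (cases "k \<in> Op") (auto intro: add_pos_nonneg add_nonneg_nonneg)
  ultimately show ?thesis unfolding half_open_cone_def by (simp add: coord)
qed

lemma frac_part_bounds:
  fixes x :: real
  shows "x > 0 \<Longrightarrow> 0 < x - real (nat (\<lceil>x\<rceil> - 1)) \<and> x - real (nat (\<lceil>x\<rceil> - 1)) \<le> 1"
    and "x \<ge> 0 \<Longrightarrow> 0 \<le> x - real (nat \<lfloor>x\<rfloor>) \<and> x - real (nat \<lfloor>x\<rfloor>) < 1"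
proof -
  assume "x > 0"
  then have "real (nat (\<lceil>x\<rceil> - 1)) = of_int \<lceil>x\<rceil> - 1" by simp
  then show "0 < x - real (nat (\<lceil>x\<rceil> - 1)) \<and> x - real (nat (\<lceil>x\<rceil> - 1)) \<le> 1"
    using ceiling_correct[of x] by linarith
next
  assume "x \<ge> 0"
  then have "real (nat \<lfloor>x\<rfloor>) = of_int \<lfloor>x\<rfloor>" by simp
  then show "0 \<le> x - real (nat \<lfloor>x\<rfloor>) \<and> x - real (nat \<lfloor>x\<rfloor>) < 1"
    using of_int_floor_le[of x] real_of_int_floor_add_one_gt[of x] by linarith
qed

lemma half_open_cone_decompose:
  assumes S: "simplicial_cone J V L" and J: "finite J" and z: "z \<in> half_open_cone J L Op"
  shows "\<exists>p\<in>fund_par J L Op. \<exists>m\<in>PiE J (\<lambda>_. UNIV). z = (\<lambda>x. p x + gen_comb J V (\<lambda>k. int (m k)) x)"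
proof -
  define lam where "lam k = rdot J (L k) (real_vec z)" for k
  define m where "m = (\<lambda>k\<in>J. if k \<in> Op then nat (\<lceil>lam k\<rceil> - 1) else nat \<lfloor>lam k\<rfloor>)"
  define p where "p = (\<lambda>x. z x - gen_comb J V (\<lambda>k. int (m k)) x)"
  have p_coord: "rdot J (L k) (real_vec p) = lam k - real (m k)" if k: "k \<in> J" for k
    unfolding p_def rdot_real_vec_diff simplicial_cone_rdot_gen_comb[OF S J k] lam_def by simp
  have "p \<in> fund_par J L Op"
    unfolding fund_par_def
  proof (intro CollectI conjI ballI)
    show "supp_on J p" using z supp_on_gen_comb[OF S] by (auto simp: half_open_cone_def p_def supp_on_def)
    fix k assume k: "k \<in> J"
    then have "if k \<in> Op then lam k > 0 else lam k \<ge> 0"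
      using z by (simp add: half_open_cone_def lam_def)
    then show "if k \<in> Op then 0 < rdot J (L k) (real_vec p) \<and> rdot J (L k) (real_vec p) \<le> 1
          else 0 \<le> rdot J (L k) (real_vec p) \<and> rdot J (L k) (real_vec p) < 1"
      using frac_part_bounds[of "lam k"] k by (simp add: p_coord m_def split: if_splits)
  qed
  moreover have "z = (\<lambda>x. p x + gen_comb J V (\<lambda>k. int (m k)) x)" by (simp add: p_def)
  moreover have "m \<in> PiE J (\<lambda>_. UNIV)" by (simp add: m_def)
  ultimately show ?thesis by blast
qed

lemma fund_par_translate_unique:
  assumes S: "simplicial_cone J V L" and J: "finite J"
    and p: "p \<in> fund_par J L Op" "p' \<in> fund_par J L Op" and m: "m \<in> PiE J (\<lambda>_. UNIV)" "m' \<in> PiE J (\<lambda>_. UNIV)"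
    and eq: "(\<lambda>x. p x + gen_comb J V (\<lambda>k. int (m k)) x) = (\<lambda>x. p' x + gen_comb J V (\<lambda>k. int (m' k)) x)"
  shows "m = m'" and "p = p'"
proof -
  have "m k = m' k" if k: "k \<in> J" for k
  proof -
    have "rdot J (L k) (real_vec p) + real (m k) = rdot J (L k) (real_vec p') + real (m' k)"
      using arg_cong[OF eq, of "\<lambda>z. rdot J (L k) (real_vec z)"]
      by (simp add: rdot_real_vec_add simplicial_cone_rdot_gen_comb[OF S J k])
    moreover have "if k \<in> Op then 0 < rdot J (L k) (real_vec p) \<and> rdot J (L k) (real_vec p) \<le> 1
        else 0 \<le> rdot J (L k) (real_vec p) \<and> rdot J (L k) (real_vec p) < 1"
      "if k \<in> Op then 0 < rdot J (L k) (real_vec p') \<and> rdot J (L k) (real_vec p') \<le> 1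
        else 0 \<le> rdot J (L k) (real_vec p') \<and> rdot J (L k) (real_vec p') < 1"
      using p k unfolding fund_par_def by blast+
    then have "\<bar>rdot J (L k) (real_vec p) - rdot J (L k) (real_vec p')\<bar> < 1"
      by (cases "k \<in> Op") (auto simp: abs_less_iff)
    ultimately show ?thesis by linarith
  qed
  then show "m = m'" using m by (metis PiE_ext)
  then show "p = p'" using eq by (simp add: fun_eq_iff)
qed

text \<open>Every point of a half-open simplicial cone is uniquely a point of the fundamental
  parallelepiped plus a nonnegative integer combination of the generators.\<close>

lemma half_open_cone_has_sum:
  assumes S: "simplicial_cone J V L" and J: "finite J" and ch: "lattice_char ch"
    and small: "\<And>k. k \<in> J \<Longrightarrow> norm (ch (V k)) < 1"
  shows "(ch has_sum ((\<Sum>p\<in>fund_par J L Op. ch p) * (\<Prod>k\<in>J. 1 / (1 - ch (V k))))) (half_open_cone J L Op)"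
proof -
  define M where "M = PiE J (\<lambda>_. (UNIV::nat set))"
  define G where "G = (\<Prod>k\<in>J. 1 / (1 - ch (V k)))"
  define shift where "shift p m = (\<lambda>x. p x + gen_comb J V (\<lambda>k. int (m k)) x)" for p and m :: "nat \<Rightarrow> nat"
  have each: "(ch has_sum (ch p * G)) (shift p ` M)" if p: "p \<in> fund_par J L Op" for p
  proof -
    have "inj_on (shift p) M"
      using fund_par_translate_unique(1)[OF S J p p] by (intro inj_onI) (auto simp: M_def shift_def)
    moreover have "((\<lambda>m. ch p * (\<Prod>k\<in>J. ch (V k) ^ m k)) has_sum (ch p * G)) M"
      unfolding M_def G_def by (intro has_sum_cmult_right has_sum_prod_geometric J small)
    moreover have "ch (shift p m) = ch p * (\<Prod>k\<in>J. ch (V k) ^ m k)" for m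
      using ch lattice_char_gen_comb[OF ch J] by (simp add: shift_def lattice_char_def)
    ultimately show ?thesis by (simp add: has_sum_reindex o_def)
  qed
  have "(ch has_sum (\<Sum>p\<in>fund_par J L Op. ch p * G)) (\<Union>p\<in>fund_par J L Op. shift p ` M)"
  proof (rule sum_has_sum[OF finite_fund_par[OF S J] each])
    fix p p' assume "p \<in> fund_par J L Op" "p' \<in> fund_par J L Op" "p \<noteq> p'"
    then show "shift p ` M \<inter> shift p' ` M = {}"
      using fund_par_translate_unique(2)[OF S J] by (fastforce simp: M_def shift_def)
  qed
  moreover have "half_open_cone J L Op = (\<Union>p\<in>fund_par J L Op. shift p ` M)"
  proof
    show "half_open_cone J L Op \<subseteq> (\<Union>p\<in>fund_par J L Op. shift p ` M)"
    proof
      fix z assume "z \<in> half_open_cone J L Op"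
      then obtain p m where "p \<in> fund_par J L Op" "m \<in> M" "z = shift p m"
        using half_open_cone_decompose[OF S J] unfolding M_def shift_def by blast
      then show "z \<in> (\<Union>p\<in>fund_par J L Op. shift p ` M)" by blast
    qed
    show "(\<Union>p\<in>fund_par J L Op. shift p ` M) \<subseteq> half_open_cone J L Op"
      using fund_par_translate_mem[OF S J] by (auto simp: shift_def)
  qed
  ultimately show ?thesis by (simp add: G_def sum_distrib_right)
qed
text \<open>Reflecting the fundamental parallelepiped in its centre, \<open>p \<mapsto> \<Sum>V k - p\<close>, exchanges its open
  and closed sides; this is the source of the reciprocity.\<close>

lemma fund_par_reflect:
  assumes S: "simplicial_cone J V L" and J: "finite J" and p: "p \<in> fund_par J L Op"
  shows "(\<lambda>x. gen_comb J V (\<lambda>_. 1) x - p x) \<in> fund_par J L (J - Op)"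
  unfolding fund_par_def
proof (intro CollectI conjI ballI)
  show "supp_on J (\<lambda>x. gen_comb J V (\<lambda>_. 1) x - p x)"
    using p supp_on_gen_comb[OF S] by (auto simp: fund_par_def supp_on_def)
  fix k assume k: "k \<in> J"
  have "if k \<in> Op then 0 < rdot J (L k) (real_vec p) \<and> rdot J (L k) (real_vec p) \<le> 1
        else 0 \<le> rdot J (L k) (real_vec p) \<and> rdot J (L k) (real_vec p) < 1"
    using p k unfolding fund_par_def by blast
  moreover have "rdot J (L k) (real_vec (\<lambda>x. gen_comb J V (\<lambda>_. 1) x - p x)) = 1 - rdot J (L k) (real_vec p)"
    unfolding rdot_real_vec_diff simplicial_cone_rdot_gen_comb[OF S J k] by simp
  ultimately show "if k \<in> J - Op
      then 0 < rdot J (L k) (real_vec (\<lambda>x. gen_comb J V (\<lambda>_. 1) x - p x)) \<and>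
           rdot J (L k) (real_vec (\<lambda>x. gen_comb J V (\<lambda>_. 1) x - p x)) \<le> 1
      else 0 \<le> rdot J (L k) (real_vec (\<lambda>x. gen_comb J V (\<lambda>_. 1) x - p x)) \<and>
           rdot J (L k) (real_vec (\<lambda>x. gen_comb J V (\<lambda>_. 1) x - p x)) < 1"
    using k by (cases "k \<in> Op") auto
qed

lemma fund_par_double_complement: "fund_par J L (J - (J - Op)) = fund_par J L Op"
  by (auto simp: fund_par_def)

lemma sum_fund_par_reflect:
  assumes S: "simplicial_cone J V L" and J: "finite J" and ch: "lattice_char ch"
  shows "(\<Sum>p\<in>fund_par J L (J - Op). inverse (ch p)) = (\<Sum>p\<in>fund_par J L Op. ch p) / (\<Prod>k\<in>J. ch (V k))"
proof -
  define s where "s = gen_comb J V (\<lambda>_. 1)"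
  have s: "ch s = (\<Prod>k\<in>J. ch (V k))"
    using lattice_char_gen_comb[OF ch J, of V "\<lambda>_. 1"] by (simp add: s_def)
  have "(\<Sum>p\<in>fund_par J L (J - Op). inverse (ch p)) = (\<Sum>p\<in>fund_par J L Op. inverse (ch (\<lambda>x. s x - p x)))"
    using fund_par_reflect[OF S J, of _ Op] fund_par_reflect[OF S J, of _ "J - Op"]
    by (intro sum.reindex_bij_witness[of _ "\<lambda>p x. s x - p x" "\<lambda>p x. s x - p x"])
       (auto simp: s_def fund_par_double_complement)
  also have "\<dots> = (\<Sum>p\<in>fund_par J L Op. ch p / ch s)"
    using lattice_char_diff[OF ch] lattice_char_nonzero[OF ch] by (intro sum.cong refl) simp
  finally show ?thesis by (simp add: s sum_divide_distrib)
qed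

lemma half_open_cone_reciprocity:
  assumes S: "simplicial_cone J V L" and J: "finite J" and ch: "lattice_char ch"
    and big: "\<And>k. k \<in> J \<Longrightarrow> norm (ch (V k)) > 1"
  shows "((\<lambda>z. inverse (ch z)) has_sum
      ((-1) ^ card J * ((\<Sum>p\<in>fund_par J L Op. ch p) * (\<Prod>k\<in>J. 1 / (1 - ch (V k))))))
      (half_open_cone J L (J - Op))"
proof -
  define ch' where "ch' = (\<lambda>z. inverse (ch z))"
  have small: "norm (ch' (V k)) < 1" if "k \<in> J" for k
    using big[OF that] by (simp add: ch'_def norm_inverse inverse_less_1_iff)
  have factor: "1 / ch (V k) * (1 / (1 - ch' (V k))) = (-1) * (1 / (1 - ch (V k)))" if "k \<in> J" for k
  proof -
    have "ch (V k) \<noteq> 0" "ch (V k) \<noteq> 1" using big[OF that] by auto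
    then show ?thesis by (simp add: ch'_def field_simps)
  qed
  have "(\<Sum>p\<in>fund_par J L (J - Op). ch' p) * (\<Prod>k\<in>J. 1 / (1 - ch' (V k)))
      = (\<Sum>p\<in>fund_par J L Op. ch p) * (\<Prod>k\<in>J. 1 / ch (V k) * (1 / (1 - ch' (V k))))"
    unfolding ch'_def sum_fund_par_reflect[OF S J ch] prod.distrib by (simp add: prod_dividef)
  also have "\<dots> = (\<Sum>p\<in>fund_par J L Op. ch p) * (\<Prod>k\<in>J. (-1) * (1 / (1 - ch (V k))))"
    by (simp only: prod.cong[OF refl factor])
  also have "\<dots> = (-1) ^ card J * ((\<Sum>p\<in>fund_par J L Op. ch p) * (\<Prod>k\<in>J. 1 / (1 - ch (V k))))"
    unfolding prod.distrib prod_constant by simp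
  finally show ?thesis
    using half_open_cone_has_sum[OF S J lattice_char_inverse[OF ch] small[unfolded ch'_def], of "J - Op"]
    by (simp add: ch'_def)
qed
definition mpoly_monom :: "nat \<Rightarrow> (nat \<Rightarrow> nat) \<Rightarrow> (nat \<Rightarrow> complex) \<Rightarrow> complex" where
  "mpoly_monom N e v = (\<Prod>i<N. v i ^ e i)"

definition poly_fun :: "nat \<Rightarrow> ((nat \<Rightarrow> complex) \<Rightarrow> complex) \<Rightarrow> bool" where
  "poly_fun N f \<longleftrightarrow> (\<exists>p. is_mpoly N p \<and> (\<forall>v. f v = mpoly_eval N p v))"

lemma mpoly_eval_superset:
  assumes "is_mpoly N p" "finite F" "{e. p e \<noteq> 0} \<subseteq> F"
  shows "mpoly_eval N p v = (\<Sum>e\<in>F. p e * mpoly_monom N e v)"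
  unfolding mpoly_eval_def mpoly_monom_def using assms
  by (intro sum.mono_neutral_left) (auto simp: is_mpoly_def)

lemma mpoly_monom_add: "mpoly_monom N (\<lambda>i. e1 i + e2 i) v = mpoly_monom N e1 v * mpoly_monom N e2 v"
  by (simp add: mpoly_monom_def power_add prod.distrib)

lemma poly_fun_monom:
  assumes "\<forall>i. N \<le> i \<longrightarrow> e i = 0"
  shows "poly_fun N (\<lambda>v. a * mpoly_monom N e v)"
proof -
  define p where "p = (\<lambda>e'. if e' = e then a else 0)"
  have mp: "is_mpoly N p" unfolding is_mpoly_def p_def
    using assms by (auto intro: finite_subset[of _ "{e}"])
  have "mpoly_eval N p v = (\<Sum>e'\<in>{e}. p e' * mpoly_monom N e' v)" for v
    by (rule mpoly_eval_superset[OF mp]) (auto simp: p_def)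
  then show ?thesis unfolding poly_fun_def using mp by (intro exI[of _ p]) (simp add: p_def)
qed

lemma poly_fun_const: "poly_fun N (\<lambda>v. a)"
  using poly_fun_monom[of N "\<lambda>_. 0" a] by (simp add: mpoly_monom_def)

lemma poly_fun_var:
  assumes i: "i < N"
  shows "poly_fun N (\<lambda>v. v i)"
proof -
  have "mpoly_monom N (\<lambda>j. if j = i then 1 else 0) v = v i" for v
  proof -
    have "mpoly_monom N (\<lambda>j. if j = i then 1 else 0) v = (\<Prod>j<N. if j = i then v j else 1)"
      unfolding mpoly_monom_def by (intro prod.cong refl) auto
    also have "\<dots> = v i" using i by (simp add: prod.delta)
    finally show ?thesis .
  qed
  then show ?thesis using poly_fun_monom[of N "\<lambda>j. if j = i then 1 else 0" 1] i by simp
qed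

lemma poly_fun_add:
  assumes "poly_fun N f" "poly_fun N g"
  shows "poly_fun N (\<lambda>v. f v + g v)"
proof -
  obtain p q where p: "is_mpoly N p" "\<forall>v. f v = mpoly_eval N p v"
    and q: "is_mpoly N q" "\<forall>v. g v = mpoly_eval N q v" using assms by (auto simp: poly_fun_def)
  define F where "F = {e. p e \<noteq> 0} \<union> {e. q e \<noteq> 0}"
  have F: "finite F" using p q by (auto simp: F_def is_mpoly_def)
  have mr: "is_mpoly N (\<lambda>e. p e + q e)"
    unfolding is_mpoly_def
  proof (intro conjI allI impI)
    show "finite {e. p e + q e \<noteq> 0}" by (rule finite_subset[OF _ F]) (auto simp: F_def)
    fix e i assume "p e + q e \<noteq> 0" "N \<le> i"
    then show "e i = 0" using p(1) q(1) unfolding is_mpoly_def by (metis add.right_neutral add_0)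
  qed
  have "mpoly_eval N (\<lambda>e. p e + q e) v = mpoly_eval N p v + mpoly_eval N q v" for v
  proof -
    have "mpoly_eval N (\<lambda>e. p e + q e) v = (\<Sum>e\<in>F. (p e + q e) * mpoly_monom N e v)"
      by (rule mpoly_eval_superset[OF mr F]) (auto simp: F_def)
    also have "\<dots> = (\<Sum>e\<in>F. p e * mpoly_monom N e v) + (\<Sum>e\<in>F. q e * mpoly_monom N e v)"
      by (simp add: distrib_right sum.distrib)
    also have "\<dots> = mpoly_eval N p v + mpoly_eval N q v"
      using mpoly_eval_superset[OF p(1) F] mpoly_eval_superset[OF q(1) F] by (auto simp: F_def)
    finally show ?thesis .
  qed
  then show ?thesis unfolding poly_fun_def using mr p q by (intro exI[of _ "\<lambda>e. p e + q e"]) auto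
qed

definition mpoly_mult :: "((nat \<Rightarrow> nat) \<Rightarrow> complex) \<Rightarrow> ((nat \<Rightarrow> nat) \<Rightarrow> complex) \<Rightarrow> (nat \<Rightarrow> nat) \<Rightarrow> complex" where
  "mpoly_mult p q e = (\<Sum>x\<in>{x\<in>{e. p e \<noteq> 0} \<times> {e. q e \<noteq> 0}. (\<lambda>i. fst x i + snd x i) = e}. p (fst x) * q (snd x))"

lemma mpoly_mult_nonzero:
  assumes "mpoly_mult p q e \<noteq> 0"
  shows "\<exists>e1 e2. p e1 \<noteq> 0 \<and> q e2 \<noteq> 0 \<and> e = (\<lambda>i. e1 i + e2 i)"
proof -
  have "{x\<in>{e. p e \<noteq> 0} \<times> {e. q e \<noteq> 0}. (\<lambda>i. fst x i + snd x i) = e} \<noteq> {}"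
    using assms unfolding mpoly_mult_def by (metis sum.empty)
  then show ?thesis by auto
qed

lemma mpoly_mult_support:
  "{e. mpoly_mult p q e \<noteq> 0} \<subseteq> (\<lambda>(e1, e2) i. e1 i + e2 i) ` ({e. p e \<noteq> 0} \<times> {e. q e \<noteq> 0})"
proof
  fix e assume "e \<in> {e. mpoly_mult p q e \<noteq> 0}"
  then obtain e1 e2 where "p e1 \<noteq> 0" "q e2 \<noteq> 0" "e = (\<lambda>i. e1 i + e2 i)"
    using mpoly_mult_nonzero by blast
  then show "e \<in> (\<lambda>(e1, e2) i. e1 i + e2 i) ` ({e. p e \<noteq> 0} \<times> {e. q e \<noteq> 0})" by force
qed

lemma is_mpoly_mult:
  assumes p: "is_mpoly N p" and q: "is_mpoly N q"
  shows "is_mpoly N (mpoly_mult p q)"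
  unfolding is_mpoly_def
proof (intro conjI allI impI)
  have "finite ({e. p e \<noteq> 0} \<times> {e. q e \<noteq> 0})" using p q by (simp add: is_mpoly_def)
  then show "finite {e. mpoly_mult p q e \<noteq> 0}"
    using mpoly_mult_support finite_subset by blast
  fix e i assume "mpoly_mult p q e \<noteq> 0" "N \<le> i"
  then show "e i = 0" using mpoly_mult_nonzero p q unfolding is_mpoly_def by fastforce
qed

lemma mpoly_eval_mult:
  assumes p: "is_mpoly N p" and q: "is_mpoly N q"
  shows "mpoly_eval N (mpoly_mult p q) v = mpoly_eval N p v * mpoly_eval N q v"
proof -
  define P where "P = {e. p e \<noteq> 0}"
  define Q where "Q = {e. q e \<noteq> 0}"
  define plus where "plus = (\<lambda>(e1::nat\<Rightarrow>nat, e2::nat\<Rightarrow>nat) i. e1 i + e2 i)"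
  have PQ: "finite P" "finite Q" using p q by (auto simp: P_def Q_def is_mpoly_def)
  have "mpoly_eval N (mpoly_mult p q) v = (\<Sum>e\<in>plus ` (P \<times> Q). mpoly_mult p q e * mpoly_monom N e v)"
    using mpoly_mult_support[of p q] PQ
    by (intro mpoly_eval_superset is_mpoly_mult p q) (auto simp: P_def Q_def plus_def)
  also have "\<dots> = (\<Sum>e\<in>plus ` (P \<times> Q). \<Sum>x\<in>{x\<in>P \<times> Q. plus x = e}. p (fst x) * q (snd x) * mpoly_monom N (plus x) v)"
    unfolding mpoly_mult_def P_def Q_def plus_def by (intro sum.cong refl) (auto simp: sum_distrib_right case_prod_beta)
  also have "\<dots> = (\<Sum>x\<in>P \<times> Q. p (fst x) * q (snd x) * mpoly_monom N (plus x) v)"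
    by (rule sum.image_gen[symmetric]) (use PQ in simp)
  also have "\<dots> = (\<Sum>x\<in>P \<times> Q. (p (fst x) * mpoly_monom N (fst x) v) * (q (snd x) * mpoly_monom N (snd x) v))"
    by (intro sum.cong refl) (auto simp: plus_def mpoly_monom_add)
  also have "\<dots> = mpoly_eval N p v * mpoly_eval N q v"
    by (simp add: sum_product sum.cartesian_product case_prod_beta mpoly_eval_def mpoly_monom_def P_def Q_def)
  finally show ?thesis .
qed

lemma poly_fun_mult:
  assumes "poly_fun N f" "poly_fun N g"
  shows "poly_fun N (\<lambda>v. f v * g v)"
proof -
  obtain p q where "is_mpoly N p" "\<forall>v. f v = mpoly_eval N p v" "is_mpoly N q" "\<forall>v. g v = mpoly_eval N q v"
    using assms by (auto simp: poly_fun_def)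
  then show ?thesis unfolding poly_fun_def
    by (intro exI[of _ "mpoly_mult p q"]) (simp add: is_mpoly_mult mpoly_eval_mult)
qed

lemma poly_fun_sum: "finite I \<Longrightarrow> (\<And>i. i \<in> I \<Longrightarrow> poly_fun N (f i)) \<Longrightarrow> poly_fun N (\<lambda>v. \<Sum>i\<in>I. f i v)"
  by (induction I rule: finite_induct) (auto intro: poly_fun_add poly_fun_const)

lemma poly_fun_prod: "finite I \<Longrightarrow> (\<And>i. i \<in> I \<Longrightarrow> poly_fun N (f i)) \<Longrightarrow> poly_fun N (\<lambda>v. \<Prod>i\<in>I. f i v)"
  by (induction I rule: finite_induct) (auto intro: poly_fun_mult poly_fun_const)

lemma poly_fun_power: "poly_fun N f \<Longrightarrow> poly_fun N (\<lambda>v. f v ^ k)"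
  by (induction k) (auto intro: poly_fun_mult poly_fun_const)

definition var_prod :: "nat \<Rightarrow> (nat \<Rightarrow> complex) \<Rightarrow> complex" where
  "var_prod N v = (\<Prod>i<N. v i)"

text \<open>Laurent polynomials, as functions on the torus: polynomials divided by a power of the product
  of the variables.\<close>

definition laurent_fun :: "nat \<Rightarrow> ((nat \<Rightarrow> complex) \<Rightarrow> complex) \<Rightarrow> bool" where
  "laurent_fun N f \<longleftrightarrow> (\<exists>g d. poly_fun N g \<and> (\<forall>v. (\<forall>i<N. v i \<noteq> 0) \<longrightarrow> f v = g v / var_prod N v ^ d))"

lemma poly_fun_var_prod: "poly_fun N (var_prod N)"
  unfolding var_prod_def by (rule poly_fun_prod) (auto intro: poly_fun_var)

lemma var_prod_nonzero: "(\<forall>i<N. v i \<noteq> 0) \<Longrightarrow> var_prod N v \<noteq> 0"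
  by (simp add: var_prod_def)

lemma laurent_fun_poly: "poly_fun N f \<Longrightarrow> laurent_fun N f"
  unfolding laurent_fun_def by (intro exI[of _ f] exI[of _ 0]) auto

lemma laurent_fun_const: "laurent_fun N (\<lambda>v. a)"
  by (rule laurent_fun_poly[OF poly_fun_const])

lemma laurent_fun_var: "i < N \<Longrightarrow> laurent_fun N (\<lambda>v. v i)"
  by (rule laurent_fun_poly[OF poly_fun_var])

lemma laurent_fun_add:
  assumes "laurent_fun N f" "laurent_fun N g"
  shows "laurent_fun N (\<lambda>v. f v + g v)"
proof -
  obtain g1 d1 g2 d2 where 1: "poly_fun N g1" "\<forall>v. (\<forall>i<N. v i \<noteq> 0) \<longrightarrow> f v = g1 v / var_prod N v ^ d1"
    and 2: "poly_fun N g2" "\<forall>v. (\<forall>i<N. v i \<noteq> 0) \<longrightarrow> g v = g2 v / var_prod N v ^ d2"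
    using assms by (auto simp: laurent_fun_def)
  have "poly_fun N (\<lambda>v. g1 v * var_prod N v ^ d2 + g2 v * var_prod N v ^ d1)"
    by (intro poly_fun_add poly_fun_mult poly_fun_power 1 2 poly_fun_var_prod)
  moreover have "f v + g v = (g1 v * var_prod N v ^ d2 + g2 v * var_prod N v ^ d1) / var_prod N v ^ (d1 + d2)"
    if "\<forall>i<N. v i \<noteq> 0" for v
    using 1(2) 2(2) that var_prod_nonzero[OF that] by (simp add: field_simps power_add)
  ultimately show ?thesis unfolding laurent_fun_def by blast
qed

lemma laurent_fun_mult:
  assumes "laurent_fun N f" "laurent_fun N g"
  shows "laurent_fun N (\<lambda>v. f v * g v)"
proof -
  obtain g1 d1 g2 d2 where 1: "poly_fun N g1" "\<forall>v. (\<forall>i<N. v i \<noteq> 0) \<longrightarrow> f v = g1 v / var_prod N v ^ d1"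
    and 2: "poly_fun N g2" "\<forall>v. (\<forall>i<N. v i \<noteq> 0) \<longrightarrow> g v = g2 v / var_prod N v ^ d2"
    using assms by (auto simp: laurent_fun_def)
  have "f v * g v = (g1 v * g2 v) / var_prod N v ^ (d1 + d2)" if "\<forall>i<N. v i \<noteq> 0" for v
    using 1(2) 2(2) that var_prod_nonzero[OF that] by (simp add: field_simps power_add)
  then show ?thesis unfolding laurent_fun_def using poly_fun_mult[OF 1(1) 2(1)] by blast
qed

lemma laurent_fun_diff: "laurent_fun N f \<Longrightarrow> laurent_fun N g \<Longrightarrow> laurent_fun N (\<lambda>v. f v - g v)"
  using laurent_fun_add[of N f "\<lambda>v. (-1) * g v"] laurent_fun_mult[OF laurent_fun_const, of N g "-1"] by simp

lemma laurent_fun_sum: "finite I \<Longrightarrow> (\<And>i. i \<in> I \<Longrightarrow> laurent_fun N (f i)) \<Longrightarrow> laurent_fun N (\<lambda>v. \<Sum>i\<in>I. f i v)"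
  by (induction I rule: finite_induct) (auto intro: laurent_fun_add laurent_fun_const)

lemma laurent_fun_prod: "finite I \<Longrightarrow> (\<And>i. i \<in> I \<Longrightarrow> laurent_fun N (f i)) \<Longrightarrow> laurent_fun N (\<lambda>v. \<Prod>i\<in>I. f i v)"
  by (induction I rule: finite_induct) (auto intro: laurent_fun_mult laurent_fun_const)

lemma laurent_fun_power: "laurent_fun N f \<Longrightarrow> laurent_fun N (\<lambda>v. f v ^ k)"
  by (induction k) (auto intro: laurent_fun_mult laurent_fun_const)

lemma laurent_fun_inverse_var:
  assumes i: "i < N"
  shows "laurent_fun N (\<lambda>v. inverse (v i))"
proof -
  have "inverse (v i) = (\<Prod>j\<in>{..<N} - {i}. v j) / var_prod N v ^ 1" if "\<forall>j<N. v j \<noteq> 0" for v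
  proof -
    have "var_prod N v = v i * (\<Prod>j\<in>{..<N} - {i}. v j)"
      unfolding var_prod_def using i by (simp add: prod.remove)
    then show ?thesis using that i by (simp add: field_simps)
  qed
  moreover have "poly_fun N (\<lambda>v. \<Prod>j\<in>{..<N} - {i}. v j)"
    by (rule poly_fun_prod) (auto intro: poly_fun_var)
  ultimately show ?thesis unfolding laurent_fun_def by blast
qed

lemma laurent_fun_power_int_var: "i < N \<Longrightarrow> laurent_fun N (\<lambda>v. v i powi e)"
  unfolding power_int_def
  by (cases "e \<ge> 0") (simp_all add: laurent_fun_power laurent_fun_var laurent_fun_inverse_var)

lemma sum_laurent_fractions:
  assumes I: "finite I" and a: "\<And>i. i \<in> I \<Longrightarrow> laurent_fun N (a i)" and b: "\<And>i. i \<in> I \<Longrightarrow> laurent_fun N (b i)"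
  shows "\<exists>P Q. poly_fun N P \<and> poly_fun N Q \<and> (\<forall>v. (\<forall>j<N. v j \<noteq> 0) \<and> (\<forall>i\<in>I. b i v \<noteq> 0) \<longrightarrow>
     Q v \<noteq> 0 \<and> (\<Sum>i\<in>I. a i v / b i v) = P v / Q v)"
  using I a b
proof (induction I rule: finite_induct)
  case empty
  then show ?case by (intro exI[of _ "\<lambda>v. 0"] exI[of _ "\<lambda>v. 1"]) (auto intro: poly_fun_const)
next
  case (insert x I)
  obtain P Q where PQ: "poly_fun N P" "poly_fun N Q" "\<forall>v. (\<forall>j<N. v j \<noteq> 0) \<and> (\<forall>i\<in>I. b i v \<noteq> 0) \<longrightarrow>
     Q v \<noteq> 0 \<and> (\<Sum>i\<in>I. a i v / b i v) = P v / Q v" using insert by auto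
  obtain ga da where A: "poly_fun N ga" "\<forall>v. (\<forall>i<N. v i \<noteq> 0) \<longrightarrow> a x v = ga v / var_prod N v ^ da"
    using insert.prems(1)[of x] by (auto simp: laurent_fun_def)
  obtain gb db where B: "poly_fun N gb" "\<forall>v. (\<forall>i<N. v i \<noteq> 0) \<longrightarrow> b x v = gb v / var_prod N v ^ db"
    using insert.prems(2)[of x] by (auto simp: laurent_fun_def)
  define P' where "P' v = ga v * var_prod N v ^ db * Q v + P v * (gb v * var_prod N v ^ da)" for v
  define Q' where "Q' v = gb v * var_prod N v ^ da * Q v" for v
  have "poly_fun N P'" "poly_fun N Q'" unfolding P'_def Q'_def
    by (intro poly_fun_add poly_fun_mult poly_fun_power PQ A B poly_fun_var_prod)+
  moreover have "Q' v \<noteq> 0 \<and> (\<Sum>i\<in>insert x I. a i v / b i v) = P' v / Q' v"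
    if v: "(\<forall>j<N. v j \<noteq> 0) \<and> (\<forall>i\<in>insert x I. b i v \<noteq> 0)" for v
  proof -
    have m: "var_prod N v \<noteq> 0" using var_prod_nonzero v by blast
    have Qv: "Q v \<noteq> 0" "(\<Sum>i\<in>I. a i v / b i v) = P v / Q v" using PQ(3) v by auto
    have gb: "gb v \<noteq> 0" using v B(2) by auto
    have "a x v / b x v = (ga v * var_prod N v ^ db) / (gb v * var_prod N v ^ da)"
      using A(2) B(2) v m gb by (simp add: field_simps)
    then show ?thesis using insert.hyps Qv m gb by (simp add: P'_def Q'_def field_simps)
  qed
  ultimately show ?case by blast
qed
text \<open>A tie-breaking vector with prescribed signs that avoids finitely many walls: take
  \<open>q k = \<plusminus>t\<^sup>k\<^sup>+\<^sup>1\<close>, so that each wall becomes a nonzero polynomial in \<open>t\<close>, and choose \<open>t\<close> beyond its roots.\<close>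

lemma generic_vector_exists:
  assumes J: "finite J" and G: "finite G" and nz: "\<And>g. g \<in> G \<Longrightarrow> \<exists>x\<in>J. g x \<noteq> 0"
  shows "\<exists>q. (\<forall>k\<in>J. q k \<noteq> 0 \<and> (q k > 0 \<longleftrightarrow> sg k)) \<and> (\<forall>g\<in>G. rdot J g q \<noteq> 0)"
proof -
  define sn where "sn k = (if sg k then 1 else (-1::real))" for k
  define P where "P g = (\<Sum>k\<in>J. monom (g k * sn k) (Suc k))" for g
  have P_nonzero: "P g \<noteq> 0" if g: "g \<in> G" for g
  proof -
    obtain x where x: "x \<in> J" "g x \<noteq> 0" using nz[OF g] by blast
    have "coeff (P g) (Suc x) = g x * sn x"
      using J x by (simp add: P_def coeff_sum if_distrib cong: if_cong)
    then have "coeff (P g) (Suc x) \<noteq> 0" using x by (simp add: sn_def)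
    then show ?thesis by auto
  qed
  define R where "R = (\<Union>g\<in>G. {x. poly (P g) x = 0})"
  have R: "finite R" unfolding R_def using G P_nonzero by (auto intro!: poly_roots_finite)
  obtain t :: real where t: "t > Max (insert 0 R)" using gt_ex by blast
  then have t_pos: "t > 0" and t_R: "t \<notin> R" using R by (auto simp: Max_gr_iff)
  define q where "q k = sn k * t ^ Suc k" for k
  show ?thesis
  proof (intro exI[of _ q] conjI ballI)
    fix k assume "k \<in> J"
    show "q k \<noteq> 0" using t_pos by (simp add: q_def sn_def)
    have "t ^ Suc k > 0" using t_pos by simp
    then show "0 < q k \<longleftrightarrow> sg k" using t_pos by (cases "sg k") (auto simp: q_def sn_def simp del: power_Suc)
  next
    fix g assume g: "g \<in> G"
    have "rdot J g q = poly (P g) t"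
      by (simp add: rdot_def q_def P_def poly_sum poly_monom mult.assoc)
    then show "rdot J g q \<noteq> 0" using t_R g by (auto simp: R_def)
  qed
qed

definition unit_gens :: "nat \<Rightarrow> nat \<Rightarrow> int" where
  "unit_gens k = (\<lambda>x. if x = k then 1 else 0)"

definition unit_duals :: "nat \<Rightarrow> nat \<Rightarrow> real" where
  "unit_duals k = (\<lambda>x. if x = k then 1 else 0)"

lemma rdot_unit_duals:
  assumes "finite J" "k \<in> J"
  shows "rdot J (unit_duals k) z = z k"
proof -
  have "rdot J (unit_duals k) z = (\<Sum>i\<in>J. if i = k then z k else 0)"
    unfolding rdot_def unit_duals_def by (intro sum.cong refl) auto
  then show ?thesis using assms by simp
qed

lemma simplicial_cone_unit:
  assumes J: "finite J"
  shows "simplicial_cone J unit_gens unit_duals"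
  unfolding simplicial_cone_def
proof (intro conjI ballI allI)
  fix k assume "k \<in> J"
  then show "supp_on J (unit_gens k)" by (auto simp: supp_on_def unit_gens_def)
  fix j assume "j \<in> J"
  then show "rdot J (unit_duals k) (real_vec (unit_gens j)) = (if k = j then 1 else 0)"
    using J \<open>k \<in> J\<close> by (simp add: rdot_unit_duals real_vec_def unit_gens_def)
next
  fix z :: "nat \<Rightarrow> real" and i assume i: "i \<in> J"
  have "(\<Sum>k\<in>J. rdot J (unit_duals k) z * real_vec (unit_gens k) i) = (\<Sum>k\<in>J. if k = i then z k else 0)"
    using J by (intro sum.cong refl) (auto simp: rdot_unit_duals real_vec_def unit_gens_def)
  then show "z i = (\<Sum>k\<in>J. rdot J (unit_duals k) z * real_vec (unit_gens k) i)" using J i by simp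
qed

lemma nonneg_gens_unit: "nonneg_gens J unit_gens"
  by (simp add: nonneg_gens_def unit_gens_def)

text \<open>A triangulation of the half-open orthant (coordinates \<open>k\<close> with \<open>sg k\<close> nonnegative, the others
  positive) refining the hyperplanes \<open>B\<close>, together with one tie-breaking vector \<open>q\<close> that is generic
  both for it and for \<open>-q\<close>.\<close>

definition orthant_triangulation ::
    "nat set \<Rightarrow> (nat \<Rightarrow> bool) \<Rightarrow> (nat \<Rightarrow> int) list \<Rightarrow> cone_data list \<Rightarrow> (nat \<Rightarrow> real) \<Rightarrow> bool" where
  "orthant_triangulation J sg B Ts q \<longleftrightarrow> (\<forall>k\<in>J. q k \<noteq> 0 \<and> (q k > 0 \<longleftrightarrow> sg k)) \<and>
     (\<forall>T\<in>set Ts. simplicial_cone J (fst T) (snd T) \<and> nonneg_gens J (fst T) \<and>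
        (\<forall>b\<in>set B. one_sided J b (fst T)) \<and> (\<forall>k\<in>J. rdot J (snd T k) q \<noteq> 0)) \<and>
     (\<forall>z. cover_count J q z Ts = (if in_half_open J unit_duals q z then 1 else 0)) \<and>
     (\<forall>z. cover_count J (\<lambda>x. - q x) z Ts = (if in_half_open J unit_duals (\<lambda>x. - q x) z then 1 else 0))"

lemma orthant_triangulation_exists:
  assumes J: "finite J"
  shows "\<exists>Ts q. orthant_triangulation J sg B Ts q"
proof -
  obtain Ts G where TG: "half_open_decomp J unit_duals Ts G"
    "\<forall>T\<in>set Ts. nonneg_gens J (fst T) \<and> (\<forall>b\<in>set B. one_sided J b (fst T))"
    using one_sided_refinement_all[OF J simplicial_cone_unit[OF J] nonneg_gens_unit] by blast
  define G' where "G' = G \<union> (\<Union>T\<in>set Ts. snd T ` J)"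
  have "finite G'" using TG(1) J by (auto simp: half_open_decomp_def G'_def)
  moreover have "\<exists>x\<in>J. g x \<noteq> 0" if g: "g \<in> G'" for g
  proof (cases "g \<in> G")
    case False
    then obtain T k where T: "T \<in> set Ts" "k \<in> J" "g = snd T k" using g unfolding G'_def by blast
    then have "simplicial_cone J (fst T) (snd T)" using TG(1) by (auto simp: half_open_decomp_def)
    then show ?thesis using T simplicial_cone_rdot_gen rdot_nonzero_left by (metis zero_neq_one)
  qed (use TG(1) in \<open>auto simp: half_open_decomp_def\<close>)
  ultimately obtain q where q: "\<forall>k\<in>J. q k \<noteq> 0 \<and> (q k > 0 \<longleftrightarrow> sg k)" "\<forall>g\<in>G'. rdot J g q \<noteq> 0"
    using generic_vector_exists[OF J] by blast
  then have "\<forall>g\<in>G. rdot J g q \<noteq> 0" "\<forall>g\<in>G. rdot J g (\<lambda>x. - q x) \<noteq> 0"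
    by (auto simp: G'_def rdot_uminus_right)
  then have "\<forall>z. cover_count J q z Ts = (if in_half_open J unit_duals q z then 1 else 0)"
    "\<forall>z. cover_count J (\<lambda>x. - q x) z Ts = (if in_half_open J unit_duals (\<lambda>x. - q x) z then 1 else 0)"
    using TG(1) unfolding half_open_decomp_def by blast+
  moreover have "\<forall>T\<in>set Ts. simplicial_cone J (fst T) (snd T)"
    using TG(1) by (simp add: half_open_decomp_def)
  moreover have "\<forall>T\<in>set Ts. \<forall>k\<in>J. rdot J (snd T k) q \<noteq> 0"
    using q(2) unfolding G'_def by blast
  ultimately show ?thesis
    unfolding orthant_triangulation_def using q(1) TG(2) by (intro exI[of _ Ts] exI[of _ q]) simp
qed

lemma has_sum_half_open_decomp:
  fixes f :: "(nat \<Rightarrow> int) \<Rightarrow> complex"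
  assumes count: "\<forall>z. cover_count J q z Ts = (if in_half_open J L q z then 1 else 0)"
    and each: "\<And>k. k < length Ts \<Longrightarrow> (f has_sum v k) {z. in_half_open J (snd (Ts!k)) q z}"
  shows "(f has_sum (\<Sum>k<length Ts. v k)) {z. in_half_open J L q z}"
proof -
  define C where "C z = {k. k < length Ts \<and> in_half_open J (snd (Ts!k)) q z}" for z
  have card_C: "card (C z) = (if in_half_open J L q z then 1 else 0)" for z
    using count unfolding cover_count_def length_filter_conv_card C_def by simp
  have unique: "k = k'" if "{k, k'} \<subseteq> C z" for k k' z
  proof (rule ccontr)
    assume "k \<noteq> k'"
    moreover have "finite (C z)" by (simp add: C_def)
    ultimately have "2 \<le> card (C z)" using card_mono[OF _ that] by simp
    then show False using card_C[of z] by (simp split: if_splits)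
  qed
  have disj: "{z. in_half_open J (snd (Ts!k)) q z} \<inter> {z. in_half_open J (snd (Ts!k')) q z} = {}"
    if "k < length Ts" "k' < length Ts" "k \<noteq> k'" for k k'
    using unique[of k k'] that by (auto simp: C_def)
  have "z \<in> (\<Union>k\<in>{..<length Ts}. {z. in_half_open J (snd (Ts!k)) q z}) \<longleftrightarrow> C z \<noteq> {}" for z
    by (auto simp: C_def)
  also have "C z \<noteq> {} \<longleftrightarrow> in_half_open J L q z" for z
  proof -
    have "finite (C z)" by (simp add: C_def)
    then have "C z \<noteq> {} \<longleftrightarrow> card (C z) \<noteq> 0" by simp
    then show ?thesis using card_C[of z] by simp
  qed
  finally have "(\<Union>k\<in>{..<length Ts}. {z. in_half_open J (snd (Ts!k)) q z}) = {z. in_half_open J L q z}"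
    by blast
  then show ?thesis
    using sum_has_sum[of "{..<length Ts}" f "\<lambda>k. {z. in_half_open J (snd (Ts!k)) q z}" v] each disj
    by simp
qed

lemma in_half_open_eq_half_open_cone:
  assumes "\<forall>k\<in>J. rdot J (L k) q \<noteq> 0"
  shows "{z. in_half_open J L q z} = half_open_cone J L {k\<in>J. rdot J (L k) q < 0}"
    and "{z. in_half_open J L (\<lambda>x. - q x) z} = half_open_cone J L (J - {k\<in>J. rdot J (L k) q < 0})"
proof -
  have p1: "lex_pos a b \<longleftrightarrow> (if b < 0 then a > 0 else a \<ge> 0)" if "b \<noteq> 0" for a b :: real
    using that by (auto simp: lex_pos_def)
  have p2: "lex_pos a (-b) \<longleftrightarrow> (if b < 0 then a \<ge> 0 else a > 0)" if "b \<noteq> 0" for a b :: real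
    using that by (auto simp: lex_pos_def)
  show "{z. in_half_open J L q z} = half_open_cone J L {k\<in>J. rdot J (L k) q < 0}"
    using assms by (auto simp: in_half_open_def half_open_cone_def p1)
  show "{z. in_half_open J L (\<lambda>x. - q x) z} = half_open_cone J L (J - {k\<in>J. rdot J (L k) q < 0})"
    using assms by (auto simp: in_half_open_def half_open_cone_def p2 rdot_uminus_right)
qed

lemma idot_cone_expansion:
  assumes S: "simplicial_cone J V L"
  shows "real_of_int (idot J b z) = (\<Sum>k\<in>J. rdot J (L k) (real_vec z) * real_of_int (idot J b (V k)))"
proof -
  have "real_of_int (idot J b z) = (\<Sum>x\<in>J. real_of_int (b x) * real_vec z x)"
    by (simp add: idot_def real_vec_def)
  also have "\<dots> = (\<Sum>x\<in>J. real_of_int (b x) * (\<Sum>k\<in>J. rdot J (L k) (real_vec z) * real_vec (V k) x))"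
    using S by (intro sum.cong refl) (auto simp: simplicial_cone_def)
  also have "\<dots> = (\<Sum>x\<in>J. \<Sum>k\<in>J. rdot J (L k) (real_vec z) * (real_of_int (b x) * real_vec (V k) x))"
    by (simp add: sum_distrib_left mult.left_commute)
  also have "\<dots> = (\<Sum>k\<in>J. \<Sum>x\<in>J. rdot J (L k) (real_vec z) * (real_of_int (b x) * real_vec (V k) x))"
    by (rule sum.swap)
  also have "\<dots> = (\<Sum>k\<in>J. rdot J (L k) (real_vec z) * real_of_int (idot J b (V k)))"
    by (simp add: sum_distrib_left idot_def real_vec_def)
  finally show ?thesis .
qed

lemma idot_nonneg_on_cone:
  assumes S: "simplicial_cone J V L" and z: "\<forall>k\<in>J. rdot J (L k) (real_vec z) \<ge> 0"
    and b: "\<forall>k\<in>J. idot J b (V k) \<ge> 0"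
  shows "idot J b z \<ge> 0"
proof -
  have "real_of_int (idot J b z) \<ge> 0" unfolding idot_cone_expansion[OF S, of b z]
    using z b by (intro sum_nonneg mult_nonneg_nonneg) auto
  then show ?thesis by simp
qed

lemma cone_point_nonneg:
  assumes S: "simplicial_cone J V L" and N: "nonneg_gens J V"
    and z: "\<forall>k\<in>J. rdot J (L k) (real_vec z) \<ge> 0" and x: "x \<in> J"
  shows "z x \<ge> 0"
proof -
  have "real_vec z x = (\<Sum>k\<in>J. rdot J (L k) (real_vec z) * real_vec (V k) x)"
    using S x by (auto simp: simplicial_cone_def)
  also have "\<dots> \<ge> 0"
    using z N by (intro sum_nonneg mult_nonneg_nonneg) (auto simp: nonneg_gens_def real_vec_def)
  finally show ?thesis by (simp add: real_vec_def)
qed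
definition form_diffs :: "(nat \<Rightarrow> nat \<Rightarrow> nat \<Rightarrow> int) \<Rightarrow> nat \<Rightarrow> nat \<Rightarrow> (nat \<Rightarrow> int) list" where
  "form_diffs c s t = map (\<lambda>(\<sigma>, \<tau>, \<tau>'). (\<lambda>x. c \<sigma> \<tau>' x - c \<sigma> \<tau> x))
     (List.product [0..<s] (List.product [0..<t] [0..<t]))"

lemma form_diffs_mem:
  "\<sigma> < s \<Longrightarrow> \<tau> < t \<Longrightarrow> \<tau>' < t \<Longrightarrow> (\<lambda>x. c \<sigma> \<tau>' x - c \<sigma> \<tau> x) \<in> set (form_diffs c s t)"
  unfolding form_diffs_def set_map by (rule image_eqI[of _ _ "(\<sigma>, \<tau>, \<tau>')"]) auto

text \<open>\<open>tau \<sigma>\<close> selects, for each \<open>\<sigma>\<close>, a linear form \<open>L\<^sub>\<sigma>\<^sub>\<tau>\<close> that is minimal on all generators,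
  hence on the whole cone.\<close>

definition min_selector :: "nat set \<Rightarrow> (nat \<Rightarrow> nat \<Rightarrow> nat \<Rightarrow> int) \<Rightarrow> nat \<Rightarrow> nat \<Rightarrow> (nat \<Rightarrow> nat \<Rightarrow> int) \<Rightarrow>
    (nat \<Rightarrow> nat) \<Rightarrow> bool" where
  "min_selector J c s t V tau \<longleftrightarrow>
     (\<forall>\<sigma><s. tau \<sigma> < t \<and> (\<forall>\<tau><t. \<forall>k\<in>J. idot J (c \<sigma> (tau \<sigma>)) (V k) \<le> idot J (c \<sigma> \<tau>) (V k)))"

text \<open>If all differences of the forms are one-sided on the generators, a form minimising the sum over
  the generators is minimal on each generator.\<close>

lemma min_form_index_exists:
  assumes J: "finite J" and os: "\<forall>b\<in>set (form_diffs c s t). one_sided J b V" and t: "t \<ge> 1" and \<sigma>: "\<sigma> < s"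
  shows "\<exists>\<tau>0<t. \<forall>\<tau><t. \<forall>k\<in>J. idot J (c \<sigma> \<tau>0) (V k) \<le> idot J (c \<sigma> \<tau>) (V k)"
proof -
  define F where "F \<tau> = (\<Sum>k\<in>J. idot J (c \<sigma> \<tau>) (V k))" for \<tau>
  have "F ` {..<t} \<noteq> {}" using t by (auto simp: lessThan_empty_iff)
  then have "Min (F ` {..<t}) \<in> F ` {..<t}" by (intro Min_in) auto
  then obtain \<tau>0 where "\<tau>0 < t" "F \<tau>0 = Min (F ` {..<t})" by auto
  then have \<tau>0: "\<tau>0 < t" "\<forall>\<tau><t. F \<tau>0 \<le> F \<tau>" by auto
  show ?thesis
  proof (intro exI[of _ \<tau>0] conjI allI impI ballI)
    show "\<tau>0 < t" by fact
    fix \<tau> k assume \<tau>: "\<tau> < t" and k: "k \<in> J"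
    have "one_sided J (\<lambda>x. c \<sigma> \<tau> x - c \<sigma> \<tau>0 x) V" using os form_diffs_mem[OF \<sigma> \<tau>0(1) \<tau>] by auto
    then consider (le) "\<forall>k\<in>J. idot J (c \<sigma> \<tau>0) (V k) \<le> idot J (c \<sigma> \<tau>) (V k)"
      | (ge) "\<forall>k\<in>J. idot J (c \<sigma> \<tau>) (V k) \<le> idot J (c \<sigma> \<tau>0) (V k)"
      unfolding one_sided_def idot_diff_left by fastforce
    then show "idot J (c \<sigma> \<tau>0) (V k) \<le> idot J (c \<sigma> \<tau>) (V k)"
    proof cases
      case ge
      have "F \<tau> \<le> F \<tau>0" unfolding F_def using ge by (intro sum_mono) blast
      then have "F \<tau> = F \<tau>0" using \<tau>0 \<tau> by (simp add: order_antisym)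
      then have "idot J (c \<sigma> \<tau>) (V k) = idot J (c \<sigma> \<tau>0) (V k)"
        using sum_mono_inv[OF _ _ k J, of "\<lambda>k. idot J (c \<sigma> \<tau>) (V k)" "\<lambda>k. idot J (c \<sigma> \<tau>0) (V k)"] ge
        unfolding F_def by blast
      then show ?thesis by simp
    qed (use k in blast)
  qed
qed

lemma min_selector_exists:
  assumes "finite J" "\<forall>b\<in>set (form_diffs c s t). one_sided J b V" "t \<ge> 1"
  shows "\<exists>tau. min_selector J c s t V tau"
proof -
  have "\<forall>\<sigma>. \<exists>\<tau>0. \<sigma> < s \<longrightarrow> \<tau>0 < t \<and> (\<forall>\<tau><t. \<forall>k\<in>J. idot J (c \<sigma> \<tau>0) (V k) \<le> idot J (c \<sigma> \<tau>) (V k))"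
    using min_form_index_exists[OF assms(1,2,3)] by blast
  then show ?thesis unfolding min_selector_def by (rule choice)
qed

text \<open>On a cone where \<open>tau\<close> selects the minimal forms, the summand of the zeta function is the
  multiplicative character \<open>cone_char\<close>.\<close>

definition cone_char :: "(nat \<Rightarrow> complex) \<Rightarrow> (nat \<Rightarrow> complex) \<Rightarrow> nat set \<Rightarrow> (nat \<Rightarrow> nat \<Rightarrow> nat \<Rightarrow> int) \<Rightarrow>
    nat \<Rightarrow> (nat \<Rightarrow> nat) \<Rightarrow> (nat \<Rightarrow> int) \<Rightarrow> complex" where
  "cone_char X Y J c s tau z = (\<Prod>\<rho>\<in>J. X \<rho> powi z \<rho>) * (\<Prod>\<sigma><s. Y \<sigma> powi idot J (c \<sigma> (tau \<sigma>)) z)"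

lemma lattice_char_cone_char:
  assumes "\<forall>\<rho>\<in>J. X \<rho> \<noteq> 0" "\<forall>\<sigma><s. Y \<sigma> \<noteq> 0"
  shows "lattice_char (cone_char X Y J c s tau)"
  unfolding lattice_char_def cone_char_def
proof (intro conjI allI)
  fix z w :: "nat \<Rightarrow> int"
  have "(\<Prod>\<rho>\<in>J. X \<rho> powi (z \<rho> + w \<rho>)) = (\<Prod>\<rho>\<in>J. X \<rho> powi z \<rho>) * (\<Prod>\<rho>\<in>J. X \<rho> powi w \<rho>)"
    using assms(1) by (simp add: power_int_add prod.distrib)
  moreover have "(\<Prod>\<sigma><s. Y \<sigma> powi idot J (c \<sigma> (tau \<sigma>)) (\<lambda>x. z x + w x)) =
      (\<Prod>\<sigma><s. Y \<sigma> powi idot J (c \<sigma> (tau \<sigma>)) z) * (\<Prod>\<sigma><s. Y \<sigma> powi idot J (c \<sigma> (tau \<sigma>)) w)"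
    using assms(2) by (simp add: idot_add power_int_add prod.distrib)
  ultimately show "(\<Prod>\<rho>\<in>J. X \<rho> powi (z \<rho> + w \<rho>)) * (\<Prod>\<sigma><s. Y \<sigma> powi idot J (c \<sigma> (tau \<sigma>)) (\<lambda>x. z x + w x)) =
    (\<Prod>\<rho>\<in>J. X \<rho> powi z \<rho>) * (\<Prod>\<sigma><s. Y \<sigma> powi idot J (c \<sigma> (tau \<sigma>)) z) *
    ((\<Prod>\<rho>\<in>J. X \<rho> powi w \<rho>) * (\<Prod>\<sigma><s. Y \<sigma> powi idot J (c \<sigma> (tau \<sigma>)) w))"
    by (simp add: mult_ac)
qed (simp add: idot_def)

lemma Zterm_inverse:
  "Zterm c n s t (\<lambda>\<rho>. inverse (X \<rho>)) (\<lambda>\<sigma>. inverse (Y \<sigma>)) r = inverse (Zterm c n s t X Y r)"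
proof -
  have "(\<Prod>\<rho><n. inverse (X \<rho>) ^ r \<rho>) = inverse (\<Prod>\<rho><n. X \<rho> ^ r \<rho>)"
    using prod_inversef[of "\<lambda>\<rho>. X \<rho> ^ r \<rho>" "{..<n}"] by (simp add: o_def power_inverse)
  moreover have "(\<Prod>\<sigma><s. inverse (Y \<sigma>) powi m \<sigma>) = inverse (\<Prod>\<sigma><s. Y \<sigma> powi m \<sigma>)" for m
    using prod_inversef[of "\<lambda>\<sigma>. Y \<sigma> powi m \<sigma>" "{..<s}"] by (simp add: o_def power_int_inverse)
  ultimately show ?thesis by (simp add: Zterm_def)
qed

lemma Zterm_eq_cone_char:
  assumes J: "finite J" "J \<subseteq> {..<n}" and S: "simplicial_cone J V L" and N: "nonneg_gens J V"
    and z: "supp_on J z" "\<forall>k\<in>J. rdot J (L k) (real_vec z) \<ge> 0"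
    and tau: "min_selector J c s t V tau"
  shows "Zterm c n s t X Y (\<lambda>i. nat (z i)) = cone_char X Y J c s tau z"
proof -
  have z0: "x \<notin> J \<Longrightarrow> z x = 0" for x using z(1) by (simp add: supp_on_def)
  have z_nonneg: "z x \<ge> 0" for x
    using cone_point_nonneg[OF S N z(2)] z0 by (cases "x \<in> J") auto
  have X: "(\<Prod>\<rho><n. X \<rho> ^ nat (z \<rho>)) = (\<Prod>\<rho>\<in>J. X \<rho> powi z \<rho>)"
  proof -
    have "(\<Prod>\<rho><n. X \<rho> ^ nat (z \<rho>)) = (\<Prod>\<rho>\<in>J. X \<rho> ^ nat (z \<rho>))"
      using J z0 by (intro prod.mono_neutral_right) auto
    also have "\<dots> = (\<Prod>\<rho>\<in>J. X \<rho> powi z \<rho>)"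
      using z_nonneg by (intro prod.cong refl) (metis int_nat_eq power_int_of_nat)
    finally show ?thesis .
  qed
  have form: "linform c n \<sigma> \<tau> (\<lambda>i. nat (z i)) = idot J (c \<sigma> \<tau>) z" for \<sigma> \<tau>
  proof -
    have "linform c n \<sigma> \<tau> (\<lambda>i. nat (z i)) = (\<Sum>\<rho>\<in>J. c \<sigma> \<tau> \<rho> * int (nat (z \<rho>)))"
      unfolding linform_def using J z0 by (intro sum.mono_neutral_right) auto
    then show ?thesis using z_nonneg by (simp add: idot_def)
  qed
  have min: "Min ((\<lambda>\<tau>. linform c n \<sigma> \<tau> (\<lambda>i. nat (z i))) ` {..<t}) = idot J (c \<sigma> (tau \<sigma>)) z"
    if \<sigma>: "\<sigma> < s" for \<sigma>
    unfolding form
  proof (rule Min_eqI)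
    show "idot J (c \<sigma> (tau \<sigma>)) z \<in> (\<lambda>\<tau>. idot J (c \<sigma> \<tau>) z) ` {..<t}"
      using tau \<sigma> by (auto simp: min_selector_def)
    fix y assume "y \<in> (\<lambda>\<tau>. idot J (c \<sigma> \<tau>) z) ` {..<t}"
    then obtain \<tau> where \<tau>: "\<tau> < t" "y = idot J (c \<sigma> \<tau>) z" by auto
    have "idot J (\<lambda>x. c \<sigma> \<tau> x - c \<sigma> (tau \<sigma>) x) z \<ge> 0"
      using tau \<sigma> \<tau> by (intro idot_nonneg_on_cone[OF S z(2)]) (auto simp: min_selector_def idot_diff_left)
    then show "idot J (c \<sigma> (tau \<sigma>)) z \<le> y" using \<tau> by (simp add: idot_diff_left)
  qed simp
  show ?thesis unfolding Zterm_def cone_char_def X using min by simp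
qed

type_synonym fraction_data = "(nat \<Rightarrow> nat \<Rightarrow> int) \<times> (nat \<Rightarrow> int) set \<times> (nat \<Rightarrow> nat)"

text \<open>The rational function of a half-open simplicial cone: the data are the generators, the lattice
  points of the fundamental parallelepiped and the selector of minimal forms.\<close>

definition cone_fraction ::
    "(nat \<Rightarrow> complex) \<Rightarrow> (nat \<Rightarrow> complex) \<Rightarrow> nat set \<Rightarrow> (nat \<Rightarrow> nat \<Rightarrow> nat \<Rightarrow> int) \<Rightarrow> nat \<Rightarrow> fraction_data \<Rightarrow> complex" where
  "cone_fraction X Y J c s d = (\<Sum>p\<in>fst (snd d). cone_char X Y J c s (snd (snd d)) p) *
      (\<Prod>k\<in>J. 1 / (1 - cone_char X Y J c s (snd (snd d)) (fst d k)))"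

lemma half_open_cone_Zterm_has_sum:
  assumes J: "finite J" "J \<subseteq> {..<n}" and S: "simplicial_cone J V L" and N: "nonneg_gens J V"
    and tau: "min_selector J c s t V tau" and XY: "\<forall>\<rho>\<in>J. X \<rho> \<noteq> 0" "\<forall>\<sigma><s. Y \<sigma> \<noteq> 0"
  shows "(\<forall>k\<in>J. norm (cone_char X Y J c s tau (V k)) < 1) \<Longrightarrow>
      ((\<lambda>z. Zterm c n s t X Y (\<lambda>i. nat (z i))) has_sum cone_fraction X Y J c s (V, fund_par J L Op, tau))
      (half_open_cone J L Op)"
    and "(\<forall>k\<in>J. norm (cone_char X Y J c s tau (V k)) > 1) \<Longrightarrow>
      ((\<lambda>z. Zterm c n s t (\<lambda>\<rho>. inverse (X \<rho>)) (\<lambda>\<sigma>. inverse (Y \<sigma>)) (\<lambda>i. nat (z i))) has_sum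
        ((-1) ^ card J * cone_fraction X Y J c s (V, fund_par J L Op, tau))) (half_open_cone J L (J - Op))"
proof -
  have Z: "Zterm c n s t X Y (\<lambda>i. nat (z i)) = cone_char X Y J c s tau z" if "z \<in> half_open_cone J L Op'" for z Op'
    using that by (intro Zterm_eq_cone_char[OF J S N _ _ tau]) (auto simp: half_open_cone_def split: if_splits)
  have ch: "lattice_char (cone_char X Y J c s tau)" by (rule lattice_char_cone_char[OF XY])
  show "((\<lambda>z. Zterm c n s t X Y (\<lambda>i. nat (z i))) has_sum cone_fraction X Y J c s (V, fund_par J L Op, tau))
      (half_open_cone J L Op)" if "\<forall>k\<in>J. norm (cone_char X Y J c s tau (V k)) < 1"
    using half_open_cone_has_sum[OF S J(1) ch, of Op] that
    by (subst has_sum_cong[where g="cone_char X Y J c s tau"]) (simp_all add: Z cone_fraction_def)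
  show "((\<lambda>z. Zterm c n s t (\<lambda>\<rho>. inverse (X \<rho>)) (\<lambda>\<sigma>. inverse (Y \<sigma>)) (\<lambda>i. nat (z i))) has_sum
        ((-1) ^ card J * cone_fraction X Y J c s (V, fund_par J L Op, tau))) (half_open_cone J L (J - Op))"
    if "\<forall>k\<in>J. norm (cone_char X Y J c s tau (V k)) > 1"
    using half_open_cone_reciprocity[OF S J(1) ch, of Op] that
    by (subst has_sum_cong[where g="\<lambda>z. inverse (cone_char X Y J c s tau z)"])
       (simp_all add: Z Zterm_inverse cone_fraction_def)
qed

definition orthant :: "nat set \<Rightarrow> (nat \<Rightarrow> bool) \<Rightarrow> (nat \<Rightarrow> int) set" where
  "orthant J sg = {z. supp_on J z \<and> (\<forall>k\<in>J. if sg k then z k \<ge> 0 else z k > 0)}"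

lemma orthant_eq_in_half_open:
  assumes J: "finite J" and q: "\<forall>k\<in>J. q k \<noteq> 0 \<and> (q k > 0 \<longleftrightarrow> sg k)"
  shows "orthant J sg = {z. in_half_open J unit_duals q z}"
    and "orthant J (\<lambda>k. \<not> sg k) = {z. in_half_open J unit_duals (\<lambda>x. - q x) z}"
proof -
  have rdot: "rdot J (unit_duals k) (real_vec z) = real_of_int (z k)" "rdot J (unit_duals k) q = q k"
    if "k \<in> J" for k z
    using rdot_unit_duals[OF J that] by (auto simp: real_vec_def)
  have lex: "lex_pos (real_of_int (z k)) (q k) \<longleftrightarrow> (if sg k then z k \<ge> 0 else z k > 0)"
    "lex_pos (real_of_int (z k)) (- q k) \<longleftrightarrow> (if \<not> sg k then z k \<ge> 0 else z k > 0)"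
    if "k \<in> J" for k z
  proof -
    have "q k \<noteq> 0" "q k > 0 \<longleftrightarrow> sg k" using q that by auto
    then show "lex_pos (real_of_int (z k)) (q k) \<longleftrightarrow> (if sg k then z k \<ge> 0 else z k > 0)"
      "lex_pos (real_of_int (z k)) (- q k) \<longleftrightarrow> (if \<not> sg k then z k \<ge> 0 else z k > 0)"
      by (cases "sg k"; auto simp: lex_pos_def)+
  qed
  show "orthant J sg = {z. in_half_open J unit_duals q z}"
    "orthant J (\<lambda>k. \<not> sg k) = {z. in_half_open J unit_duals (\<lambda>x. - q x) z}"
    using rdot lex by (auto simp: orthant_def in_half_open_def rdot_uminus_right)
qed

definition nonneg_nonzero_gens :: "nat set \<Rightarrow> (nat \<Rightarrow> nat \<Rightarrow> int) \<Rightarrow> bool" where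
  "nonneg_nonzero_gens J V \<longleftrightarrow> (\<forall>k\<in>J. (\<forall>x. V k x \<ge> 0) \<and> supp_on J (V k) \<and> (\<Sum>x\<in>J. V k x) \<ge> 1)"

lemma simplicial_cone_nonneg_nonzero_gens:
  assumes J: "finite J" and S: "simplicial_cone J V L" and N: "nonneg_gens J V"
  shows "nonneg_nonzero_gens J V"
  unfolding nonneg_nonzero_gens_def
proof (intro ballI conjI allI)
  fix k assume k: "k \<in> J"
  show "V k x \<ge> 0" for x using N k by (auto simp: nonneg_gens_def)
  show "supp_on J (V k)" using S k by (auto simp: simplicial_cone_def)
  obtain x where x: "x \<in> J" "V k x \<noteq> 0"
    using rdot_nonzero_right[of J "L k" "real_vec (V k)"] simplicial_cone_rdot_gen[OF S k]
    by (auto simp: real_vec_def)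
  moreover have "0 \<le> V k x" using N k by (simp add: nonneg_gens_def)
  ultimately have "1 \<le> V k x" by linarith
  also have "V k x \<le> (\<Sum>x\<in>J. V k x)"
    using N k x J by (intro member_le_sum) (auto simp: nonneg_gens_def)
  finally show "(\<Sum>x\<in>J. V k x) \<ge> 1" .
qed

definition orthant_fraction ::
    "(nat \<Rightarrow> complex) \<Rightarrow> (nat \<Rightarrow> complex) \<Rightarrow> nat set \<Rightarrow> (nat \<Rightarrow> nat \<Rightarrow> nat \<Rightarrow> int) \<Rightarrow> nat \<Rightarrow> fraction_data list \<Rightarrow> complex" where
  "orthant_fraction X Y J c s D = (\<Sum>i<length D. cone_fraction X Y J c s (D ! i))"

definition gens_small :: "(nat \<Rightarrow> complex) \<Rightarrow> (nat \<Rightarrow> complex) \<Rightarrow> nat set \<Rightarrow> (nat \<Rightarrow> nat \<Rightarrow> nat \<Rightarrow> int) \<Rightarrow> nat \<Rightarrow>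
    fraction_data list \<Rightarrow> bool" where
  "gens_small X Y J c s D \<longleftrightarrow> (\<forall>d\<in>set D. \<forall>k\<in>J. norm (cone_char X Y J c s (snd (snd d)) (fst d k)) < 1)"

definition gens_large :: "(nat \<Rightarrow> complex) \<Rightarrow> (nat \<Rightarrow> complex) \<Rightarrow> nat set \<Rightarrow> (nat \<Rightarrow> nat \<Rightarrow> nat \<Rightarrow> int) \<Rightarrow> nat \<Rightarrow>
    fraction_data list \<Rightarrow> bool" where
  "gens_large X Y J c s D \<longleftrightarrow> (\<forall>d\<in>set D. \<forall>k\<in>J. norm (cone_char X Y J c s (snd (snd d)) (fst d k)) > 1)"

text \<open>Reciprocity for the zeta function restricted to a half-open orthant: both the orthant and the
  complementary half-open orthant are expanded by the same list \<open>D\<close> of cone fractions.\<close>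

definition orthant_expansion :: "nat \<Rightarrow> nat \<Rightarrow> nat \<Rightarrow> (nat \<Rightarrow> nat \<Rightarrow> nat \<Rightarrow> int) \<Rightarrow> nat set \<Rightarrow> (nat \<Rightarrow> bool) \<Rightarrow>
    fraction_data list \<Rightarrow> bool" where
  "orthant_expansion n s t c J sg D \<longleftrightarrow>
     (\<forall>d\<in>set D. finite (fst (snd d)) \<and> nonneg_nonzero_gens J (fst d)) \<and>
     (\<forall>X Y. (\<forall>\<rho>\<in>J. X \<rho> \<noteq> 0) \<and> (\<forall>\<sigma><s. Y \<sigma> \<noteq> 0) \<longrightarrow>
        (gens_small X Y J c s D \<longrightarrow>
          ((\<lambda>z. Zterm c n s t X Y (\<lambda>i. nat (z i))) has_sum orthant_fraction X Y J c s D) (orthant J sg)) \<and>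
        (gens_large X Y J c s D \<longrightarrow>
          ((\<lambda>z. Zterm c n s t (\<lambda>\<rho>. inverse (X \<rho>)) (\<lambda>\<sigma>. inverse (Y \<sigma>)) (\<lambda>i. nat (z i))) has_sum
             ((-1) ^ card J * orthant_fraction X Y J c s D)) (orthant J (\<lambda>k. \<not> sg k))))"

definition triangulation_fractions ::
    "nat set \<Rightarrow> (nat \<Rightarrow> real) \<Rightarrow> (cone_data \<Rightarrow> nat \<Rightarrow> nat) \<Rightarrow> cone_data list \<Rightarrow> fraction_data list" where
  "triangulation_fractions J q tau Ts =
     map (\<lambda>T. (fst T, fund_par J (snd T) {k\<in>J. rdot J (snd T k) q < 0}, tau T)) Ts"

lemma triangulation_cone:
  assumes T: "orthant_triangulation J sg B Ts q" and i: "i < length Ts"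
  shows "simplicial_cone J (fst (Ts ! i)) (snd (Ts ! i))" "nonneg_gens J (fst (Ts ! i))"
    and "{z. in_half_open J (snd (Ts ! i)) q z} =
      half_open_cone J (snd (Ts ! i)) {k\<in>J. rdot J (snd (Ts ! i) k) q < 0}"
    and "{z. in_half_open J (snd (Ts ! i)) (\<lambda>x. - q x) z} =
      half_open_cone J (snd (Ts ! i)) (J - {k\<in>J. rdot J (snd (Ts ! i) k) q < 0})"
  using T nth_mem[OF i] in_half_open_eq_half_open_cone by (auto simp: orthant_triangulation_def)

lemma orthant_has_sum_triangulation:
  assumes J: "finite J" "J \<subseteq> {..<n}" and T: "orthant_triangulation J sg (form_diffs c s t) Ts q"
    and tau: "\<forall>T\<in>set Ts. min_selector J c s t (fst T) (tau T)"
    and X: "\<forall>\<rho>\<in>J. X \<rho> \<noteq> 0" and Y: "\<forall>\<sigma><s. Y \<sigma> \<noteq> 0"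
    and small: "gens_small X Y J c s (triangulation_fractions J q tau Ts)"
  shows "((\<lambda>z. Zterm c n s t X Y (\<lambda>i. nat (z i))) has_sum
      orthant_fraction X Y J c s (triangulation_fractions J q tau Ts)) (orthant J sg)"
proof -
  have q: "\<forall>k\<in>J. q k \<noteq> 0 \<and> (0 < q k) = sg k"
    and count: "\<forall>z. cover_count J q z Ts = (if in_half_open J unit_duals q z then 1 else 0)"
    using T by (simp_all add: orthant_triangulation_def)
  have "((\<lambda>z. Zterm c n s t X Y (\<lambda>i. nat (z i))) has_sum
      (\<Sum>i<length Ts. cone_fraction X Y J c s (triangulation_fractions J q tau Ts ! i)))
      {z. in_half_open J unit_duals q z}"
  proof (rule has_sum_half_open_decomp[OF count])
    fix i assume i: "i < length Ts"
    then have "\<forall>k\<in>J. norm (cone_char X Y J c s (tau (Ts ! i)) (fst (Ts ! i) k)) < 1"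
      using small nth_mem[of i "triangulation_fractions J q tau Ts"]
      by (auto simp: gens_small_def triangulation_fractions_def)
    then show "((\<lambda>z. Zterm c n s t X Y (\<lambda>i. nat (z i))) has_sum
        cone_fraction X Y J c s (triangulation_fractions J q tau Ts ! i)) {z. in_half_open J (snd (Ts ! i)) q z}"
      using half_open_cone_Zterm_has_sum(1)[OF J triangulation_cone(1,2)[OF T i]
          tau[rule_format, OF nth_mem[OF i]] X Y]
      by (simp add: i triangulation_cone(3)[OF T i] triangulation_fractions_def)
  qed
  then show ?thesis
    unfolding orthant_eq_in_half_open(1)[OF J(1) q] orthant_fraction_def
    by (simp add: triangulation_fractions_def)
qed

lemma co_orthant_has_sum_triangulation:
  assumes J: "finite J" "J \<subseteq> {..<n}" and T: "orthant_triangulation J sg (form_diffs c s t) Ts q"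
    and tau: "\<forall>T\<in>set Ts. min_selector J c s t (fst T) (tau T)"
    and X: "\<forall>\<rho>\<in>J. X \<rho> \<noteq> 0" and Y: "\<forall>\<sigma><s. Y \<sigma> \<noteq> 0"
    and large: "gens_large X Y J c s (triangulation_fractions J q tau Ts)"
  shows "((\<lambda>z. Zterm c n s t (\<lambda>\<rho>. inverse (X \<rho>)) (\<lambda>\<sigma>. inverse (Y \<sigma>)) (\<lambda>i. nat (z i))) has_sum
      ((-1) ^ card J * orthant_fraction X Y J c s (triangulation_fractions J q tau Ts))) (orthant J (\<lambda>k. \<not> sg k))"
proof -
  have q: "\<forall>k\<in>J. q k \<noteq> 0 \<and> (0 < q k) = sg k"
    and count: "\<forall>z. cover_count J (\<lambda>x. - q x) z Ts = (if in_half_open J unit_duals (\<lambda>x. - q x) z then 1 else 0)"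
    using T by (simp_all add: orthant_triangulation_def)
  have "((\<lambda>z. Zterm c n s t (\<lambda>\<rho>. inverse (X \<rho>)) (\<lambda>\<sigma>. inverse (Y \<sigma>)) (\<lambda>i. nat (z i))) has_sum
      (\<Sum>i<length Ts. (-1) ^ card J * cone_fraction X Y J c s (triangulation_fractions J q tau Ts ! i)))
      {z. in_half_open J unit_duals (\<lambda>x. - q x) z}"
  proof (rule has_sum_half_open_decomp[OF count])
    fix i assume i: "i < length Ts"
    then have "\<forall>k\<in>J. norm (cone_char X Y J c s (tau (Ts ! i)) (fst (Ts ! i) k)) > 1"
      using large nth_mem[of i "triangulation_fractions J q tau Ts"]
      by (auto simp: gens_large_def triangulation_fractions_def)
    then show "((\<lambda>z. Zterm c n s t (\<lambda>\<rho>. inverse (X \<rho>)) (\<lambda>\<sigma>. inverse (Y \<sigma>)) (\<lambda>i. nat (z i))) has_sum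
        (-1) ^ card J * cone_fraction X Y J c s (triangulation_fractions J q tau Ts ! i))
        {z. in_half_open J (snd (Ts ! i)) (\<lambda>x. - q x) z}"
      using half_open_cone_Zterm_has_sum(2)[OF J triangulation_cone(1,2)[OF T i]
          tau[rule_format, OF nth_mem[OF i]] X Y]
      by (simp add: i triangulation_cone(4)[OF T i] triangulation_fractions_def)
  qed
  then show ?thesis
    unfolding orthant_eq_in_half_open(2)[OF J(1) q] orthant_fraction_def
    by (simp add: triangulation_fractions_def sum_distrib_left)
qed

lemma orthant_expansion_exists:
  assumes J: "finite J" "J \<subseteq> {..<n}" and t: "t \<ge> 1"
  shows "\<exists>D. orthant_expansion n s t c J sg D"
proof -
  obtain Ts q where T: "orthant_triangulation J sg (form_diffs c s t) Ts q"
    using orthant_triangulation_exists[OF J(1)] by blast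
  then have "\<forall>T\<in>set Ts. \<exists>tau. min_selector J c s t (fst T) tau"
    using min_selector_exists[OF J(1) _ t] by (auto simp: orthant_triangulation_def)
  then obtain tau where tau: "\<forall>T\<in>set Ts. min_selector J c s t (fst T) (tau T)"
    by (metis bchoice)
  have "orthant_expansion n s t c J sg (triangulation_fractions J q tau Ts)"
    unfolding orthant_expansion_def
    using T finite_fund_par[OF _ J(1)] simplicial_cone_nonneg_nonzero_gens[OF J(1)]
      orthant_has_sum_triangulation[OF J T tau] co_orthant_has_sum_triangulation[OF J T tau]
    by (auto simp: triangulation_fractions_def orthant_triangulation_def)
  then show ?thesis ..
qed
text \<open>Exponent vectors of \<open>cone l a\<close> with vanishing set \<open>S\<close> among the last \<open>a\<close> coordinates, and
  the larger sets used for inclusion-exclusion over \<open>cone_circ l a\<close>; here \<open>n = l + a\<close>.\<close>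

definition cone_face :: "nat \<Rightarrow> nat \<Rightarrow> nat set \<Rightarrow> (nat \<Rightarrow> nat) set" where
  "cone_face l n S = {r. (\<forall>\<rho>. n \<le> \<rho> \<longrightarrow> r \<rho> = 0) \<and> (\<forall>\<rho>\<in>S. r \<rho> = 0) \<and> (\<forall>\<rho>\<in>{l..<n} - S. 1 \<le> r \<rho>)}"

definition circ_face :: "nat \<Rightarrow> nat \<Rightarrow> nat set \<Rightarrow> (nat \<Rightarrow> nat) set" where
  "circ_face l n S = {r. (\<forall>\<rho>. n \<le> \<rho> \<longrightarrow> r \<rho> = 0) \<and> (\<forall>\<rho>\<in>S. r \<rho> = 0) \<and> (\<forall>\<rho><l. 1 \<le> r \<rho>)}"

lemma int_vec_image_eq:
  assumes nonneg: "\<And>z i. z \<in> B \<Longrightarrow> z i \<ge> 0" and mem: "\<And>r. r \<in> A \<longleftrightarrow> (\<lambda>i. int (r i)) \<in> B"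
  shows "(\<lambda>r i. int (r i)) ` A = B"
proof
  show "(\<lambda>r i. int (r i)) ` A \<subseteq> B" using mem by auto
  show "B \<subseteq> (\<lambda>r i. int (r i)) ` A"
  proof
    fix z assume z: "z \<in> B"
    then have "z = (\<lambda>i. int (nat (z i)))" using nonneg by (simp add: fun_eq_iff)
    then show "z \<in> (\<lambda>r i. int (r i)) ` A" using z mem[of "\<lambda>i. nat (z i)"] by (metis image_eqI)
  qed
qed

lemma orthant_nonneg:
  assumes "z \<in> orthant J sg"
  shows "z i \<ge> 0"
proof (cases "i \<in> J")
  case True
  then have "if sg i then z i \<ge> 0 else z i > 0" using assms by (simp add: orthant_def)
  then show ?thesis by (simp split: if_splits)
next
  case False
  then show ?thesis using assms by (simp add: orthant_def supp_on_def)
qed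

lemma int_image_cone_face:
  assumes "S \<subseteq> {l..<n}"
  shows "(\<lambda>r i. int (r i)) ` cone_face l n S = orthant ({..<n} - S) (\<lambda>k. k < l)"
proof (rule int_vec_image_eq)
  show "z i \<ge> 0" if "z \<in> orthant ({..<n} - S) (\<lambda>k. k < l)" for z i
    by (rule orthant_nonneg[OF that])
  show "r \<in> cone_face l n S \<longleftrightarrow> (\<lambda>i. int (r i)) \<in> orthant ({..<n} - S) (\<lambda>k. k < l)" for r
    using assms unfolding cone_face_def orthant_def supp_on_def by (auto simp: not_less Suc_le_eq)
qed

lemma int_image_circ_face:
  assumes "S \<subseteq> {l..<n}" "l \<le> n"
  shows "(\<lambda>r i. int (r i)) ` circ_face l n S = orthant ({..<n} - S) (\<lambda>k. \<not> k < l)"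
proof (rule int_vec_image_eq)
  show "z i \<ge> 0" if "z \<in> orthant ({..<n} - S) (\<lambda>k. \<not> k < l)" for z i
    by (rule orthant_nonneg[OF that])
  show "r \<in> circ_face l n S \<longleftrightarrow> (\<lambda>i. int (r i)) \<in> orthant ({..<n} - S) (\<lambda>k. \<not> k < l)" for r
  proof -
    have "k \<in> {..<n} - S" if "k < l" for k using assms that by auto
    then show ?thesis
      unfolding circ_face_def orthant_def supp_on_def by (auto simp: not_less Suc_le_eq)
  qed
qed

lemma has_sum_int_vec_reindex:
  fixes F :: "(nat \<Rightarrow> nat) \<Rightarrow> complex"
  assumes "((\<lambda>z. F (\<lambda>i. nat (z i))) has_sum v) ((\<lambda>r i. int (r i)) ` A)"
  shows "(F has_sum v) A"
proof -
  have "inj_on (\<lambda>(r::nat \<Rightarrow> nat) i. int (r i)) A"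
    by (rule inj_onI) (auto simp: fun_eq_iff)
  then show ?thesis using assms by (simp add: has_sum_reindex o_def)
qed

lemma cone_eq_UN_cone_face:
  assumes n: "n = l + a"
  shows "cone l a = (\<Union>S\<in>{S. S \<subseteq> {l..<n} \<and> S \<noteq> {}}. cone_face l n S)"
    and "\<And>S S'. S \<subseteq> {l..<n} \<Longrightarrow> S' \<subseteq> {l..<n} \<Longrightarrow> S \<noteq> S' \<Longrightarrow> cone_face l n S \<inter> cone_face l n S' = {}"
proof -
  have zeros: "S = {\<rho>\<in>{l..<n}. r \<rho> = 0}" if "r \<in> cone_face l n S" "S \<subseteq> {l..<n}" for r S
  proof -
    have zero_pos: "\<forall>\<rho>\<in>S. r \<rho> = 0" "\<forall>\<rho>\<in>{l..<n} - S. 1 \<le> r \<rho>"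
      using that(1) by (auto simp: cone_face_def)
    show ?thesis
    proof (intro set_eqI iffI)
      fix \<rho> assume "\<rho> \<in> {\<rho>\<in>{l..<n}. r \<rho> = 0}"
      then show "\<rho> \<in> S"
      proof (rule contrapos_pp)
        assume "\<rho> \<notin> S"
        then have "1 \<le> r \<rho>" using zero_pos(2) \<open>\<rho> \<in> {\<rho>\<in>{l..<n}. r \<rho> = 0}\<close> by blast
        then show "\<rho> \<notin> {\<rho>\<in>{l..<n}. r \<rho> = 0}" by simp
      qed
    qed (use zero_pos that(2) in auto)
  qed
  show "cone l a = (\<Union>S\<in>{S. S \<subseteq> {l..<n} \<and> S \<noteq> {}}. cone_face l n S)"
  proof (intro set_eqI iffI)
    fix r assume r: "r \<in> cone l a"
    then have "\<forall>\<rho>. n \<le> \<rho> \<longrightarrow> r \<rho> = 0" "\<exists>\<rho>\<in>{l..<n}. r \<rho> = 0"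
      using n by (auto simp: cone_def)
    then have "{\<rho>\<in>{l..<n}. r \<rho> = 0} \<noteq> {}" "r \<in> cone_face l n {\<rho>\<in>{l..<n}. r \<rho> = 0}"
      unfolding cone_face_def by (auto simp: Suc_le_eq)
    then show "r \<in> (\<Union>S\<in>{S. S \<subseteq> {l..<n} \<and> S \<noteq> {}}. cone_face l n S)"
      by (intro UN_I[of "{\<rho>\<in>{l..<n}. r \<rho> = 0}"]) auto
  next
    fix r assume "r \<in> (\<Union>S\<in>{S. S \<subseteq> {l..<n} \<and> S \<noteq> {}}. cone_face l n S)"
    then obtain S \<rho> where "S \<subseteq> {l..<n}" "\<rho> \<in> S" "r \<in> cone_face l n S" by blast
    then have "l \<le> \<rho> \<and> \<rho> < l + a \<and> r \<rho> = 0" "\<forall>\<rho>. l + a \<le> \<rho> \<longrightarrow> r \<rho> = 0"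
      using n by (auto simp: cone_face_def)
    then show "r \<in> cone l a" unfolding cone_def by blast
  qed
  show "cone_face l n S \<inter> cone_face l n S' = {}" if "S \<subseteq> {l..<n}" "S' \<subseteq> {l..<n}" "S \<noteq> S'" for S S'
  proof (rule equals0I)
    fix r assume "r \<in> cone_face l n S \<inter> cone_face l n S'"
    then have "r \<in> cone_face l n S" "r \<in> cone_face l n S'" by auto
    then show False using zeros[of r S] zeros[of r S'] that by simp
  qed
qed

lemma sum_nonempty_subsets_alternating:
  assumes "finite Z" "Z \<noteq> {}"
  shows "(\<Sum>S\<in>{S. S \<subseteq> Z \<and> S \<noteq> {}}. (-1::complex) ^ (card S + 1)) = 1"
proof -
  have "(\<Sum>S\<in>Pow Z. (-1::complex) ^ card S) = 0"
  proof (rule sum_alternating_cancels)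
    show "finite (Pow Z)" using assms by simp
    show "card {x \<in> Pow Z. even (card x)} = card {x \<in> Pow Z. odd (card x)}"
      using card_subsupersets_even_odd[of Z "{}"] assms by (auto simp: Pow_def)
  qed
  moreover have "Pow Z = insert {} {S. S \<subseteq> Z \<and> S \<noteq> {}}" by auto
  moreover have "finite {S. S \<subseteq> Z \<and> S \<noteq> {}}" using assms by (auto intro: finite_subset[of _ "Pow Z"])
  ultimately have "(\<Sum>S\<in>{S. S \<subseteq> Z \<and> S \<noteq> {}}. (-1::complex) ^ card S) = -1"
    by (simp add: eq_neg_iff_add_eq_0 add.commute)
  then show ?thesis by (simp add: sum_negf)
qed

text \<open>A point of \<open>\<nat>\<^sup>l \<times> \<nat>\<^sub>0\<^sup>a\<close> lies in \<open>circ_face l n S\<close> iff \<open>S\<close> is contained in its zero set \<open>Z\<close>, and the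
  alternating count of the nonempty such \<open>S\<close> is \<open>1\<close> if \<open>Z \<noteq> {}\<close> and \<open>0\<close> otherwise.\<close>

lemma cone_circ_inclusion_exclusion:
  fixes f :: "(nat \<Rightarrow> nat) \<Rightarrow> complex"
  assumes n: "n = l + a"
    and face: "\<And>S. S \<subseteq> {l..<n} \<Longrightarrow> S \<noteq> {} \<Longrightarrow> (f has_sum w S) (circ_face l n S)"
  shows "(f has_sum (\<Sum>S\<in>{S. S \<subseteq> {l..<n} \<and> S \<noteq> {}}. (-1) ^ (card S + 1) * w S)) (cone_circ l a)"
proof -
  define Fc where "Fc = {S. S \<subseteq> {l..<n} \<and> S \<noteq> {}}"
  define U where "U = {r::nat\<Rightarrow>nat. (\<forall>\<rho>. n \<le> \<rho> \<longrightarrow> r \<rho> = 0) \<and> (\<forall>\<rho><l. 1 \<le> r \<rho>)}"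
  define Z where "Z r = {\<rho>\<in>{l..<n}. r \<rho> = 0}" for r :: "nat \<Rightarrow> nat"
  define ind where "ind S r = (if r \<in> circ_face l n S then 1 else 0 :: complex)" for S r
  have finFc: "finite Fc" unfolding Fc_def by (rule finite_subset[of _ "Pow {l..<n}"]) auto
  have circ_face_iff: "r \<in> circ_face l n S \<longleftrightarrow> r \<in> U \<and> S \<subseteq> Z r" if "S \<in> Fc" for r S
    using that unfolding circ_face_def U_def Z_def Fc_def by auto
  have "((\<lambda>r. (-1) ^ (card S + 1) * (f r * ind S r)) has_sum ((-1) ^ (card S + 1) * w S)) U" if S: "S \<in> Fc" for S
  proof (rule has_sum_cmult_right)
    show "((\<lambda>r. f r * ind S r) has_sum w S) U"
      using face[of S] S circ_face_iff[OF S]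
      by (subst has_sum_cong_neutral[where g=f and T="circ_face l n S"]) (auto simp: Fc_def ind_def)
  qed
  then have "((\<lambda>r. \<Sum>S\<in>Fc. (-1) ^ (card S + 1) * (f r * ind S r)) has_sum
      (\<Sum>S\<in>Fc. (-1) ^ (card S + 1) * w S)) U"
    by (rule has_sum_sum_fun[OF finFc])
  moreover have "(\<Sum>S\<in>Fc. (-1) ^ (card S + 1) * (f r * ind S r)) = (if r \<in> cone_circ l a then f r else 0)"
    if r: "r \<in> U" for r
  proof -
    have "(-1) ^ (card S + 1) * (f r * ind S r) = f r * (if S \<subseteq> Z r then (-1) ^ (card S + 1) else 0)"
      if "S \<in> Fc" for S
      using circ_face_iff[OF that] r by (simp add: ind_def)
    then have "(\<Sum>S\<in>Fc. (-1) ^ (card S + 1) * (f r * ind S r)) =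
        f r * (\<Sum>S\<in>Fc. if S \<subseteq> Z r then (-1) ^ (card S + 1) else 0)"
      unfolding sum_distrib_left by (rule sum.cong[OF refl])
    also have "(\<Sum>S\<in>Fc. if S \<subseteq> Z r then (-1) ^ (card S + 1) else 0) =
        (\<Sum>S\<in>{S\<in>Fc. S \<subseteq> Z r}. (-1::complex) ^ (card S + 1))"
      by (rule sum.inter_filter[OF finFc, symmetric])
    also have "{S\<in>Fc. S \<subseteq> Z r} = {S. S \<subseteq> Z r \<and> S \<noteq> {}}" by (auto simp: Fc_def Z_def)
    also have "(\<Sum>S\<in>{S. S \<subseteq> Z r \<and> S \<noteq> {}}. (-1::complex) ^ (card S + 1)) = (if Z r \<noteq> {} then 1 else 0)"
    proof (cases "Z r = {}")
      case False
      moreover have "finite (Z r)" by (simp add: Z_def)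
      ultimately show ?thesis using sum_nonempty_subsets_alternating by simp
    qed simp
    also have "Z r \<noteq> {} \<longleftrightarrow> r \<in> cone_circ l a" using r n by (auto simp: Z_def U_def cone_circ_def)
    finally show ?thesis by simp
  qed
  ultimately have "((\<lambda>r. if r \<in> cone_circ l a then f r else 0) has_sum (\<Sum>S\<in>Fc. (-1) ^ (card S + 1) * w S)) U"
    by (rule has_sum_cong[THEN iffD1, rotated]) simp
  moreover have "cone_circ l a \<subseteq> U" using n by (auto simp: cone_circ_def U_def)
  ultimately show ?thesis
    unfolding Fc_def[symmetric]
    by (subst has_sum_cong_neutral[where g="\<lambda>r. if r \<in> cone_circ l a then f r else 0" and T=U]) auto
qed
lemma powi_le_two_power:
  fixes y :: real assumes "1/2 \<le> y" "y \<le> 2"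
  shows "y powi e \<le> 2 ^ nat \<bar>e\<bar>"
proof (cases "e \<ge> 0")
  case True
  then have "y powi e = y ^ nat e" by (simp add: power_int_def)
  also have "\<dots> \<le> 2 ^ nat e" using assms by (intro power_mono) auto
  finally show ?thesis using True by simp
next
  case False
  then have "y powi e = inverse y ^ nat (-e)" by (simp add: power_int_def)
  also have "\<dots> \<le> 2 ^ nat (-e)" using assms by (intro power_mono) (auto simp: field_simps)
  finally show ?thesis using False by simp
qed

lemma powi_ge_half_power:
  fixes y :: real assumes "1/2 \<le> y" "y \<le> 2"
  shows "y powi e \<ge> (1/2) ^ nat \<bar>e\<bar>"
proof (cases "e \<ge> 0")
  case True
  then have "y powi e = y ^ nat e" by (simp add: power_int_def)
  moreover have "(1/2) ^ nat e \<le> y ^ nat e" using assms by (intro power_mono) auto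
  ultimately show ?thesis using True by simp
next
  case False
  then have "y powi e = inverse y ^ nat (-e)" by (simp add: power_int_def)
  moreover have "(1/2) ^ nat (-e) \<le> inverse y ^ nat (-e)" using assms
    by (intro power_mono) (auto simp: field_simps)
  ultimately show ?thesis using False by simp
qed

definition y_degree :: "nat set \<Rightarrow> (nat \<Rightarrow> nat \<Rightarrow> nat \<Rightarrow> int) \<Rightarrow> nat \<Rightarrow> (nat \<Rightarrow> nat) \<Rightarrow> (nat \<Rightarrow> int) \<Rightarrow> nat" where
  "y_degree J c s tau v = (\<Sum>\<sigma><s. nat \<bar>idot J (c \<sigma> (tau \<sigma>)) v\<bar>)"

lemma norm_cone_char:
  "norm (cone_char X Y J c s tau z) =
     (\<Prod>\<rho>\<in>J. norm (X \<rho>) powi z \<rho>) * (\<Prod>\<sigma><s. norm (Y \<sigma>) powi idot J (c \<sigma> (tau \<sigma>)) z)"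
  by (simp add: cone_char_def norm_mult prod_norm[symmetric] norm_power_int)

lemma norm_Y_part_bounds:
  assumes "\<forall>\<sigma><s. 1/2 \<le> norm (Y \<sigma>) \<and> norm (Y \<sigma>) \<le> 2"
  shows "(\<Prod>\<sigma><s. norm (Y \<sigma>) powi idot J (c \<sigma> (tau \<sigma>)) v) \<le> 2 ^ y_degree J c s tau v"
    and "(\<Prod>\<sigma><s. norm (Y \<sigma>) powi idot J (c \<sigma> (tau \<sigma>)) v) \<ge> (1/2) ^ y_degree J c s tau v"
proof -
  show "(\<Prod>\<sigma><s. norm (Y \<sigma>) powi idot J (c \<sigma> (tau \<sigma>)) v) \<le> 2 ^ y_degree J c s tau v"
    unfolding y_degree_def power_sum using assms by (intro prod_mono conjI powi_le_two_power) auto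
  show "(\<Prod>\<sigma><s. norm (Y \<sigma>) powi idot J (c \<sigma> (tau \<sigma>)) v) \<ge> (1/2) ^ y_degree J c s tau v"
    unfolding y_degree_def power_sum using assms by (intro prod_mono conjI powi_ge_half_power) auto
qed

lemma norm_X_part_power:
  assumes "nonneg_nonzero_gens J V" "k \<in> J"
  shows "(\<Prod>\<rho>\<in>J. norm (X \<rho>) powi V k \<rho>) = (\<Prod>\<rho>\<in>J. norm (X \<rho>) ^ nat (V k \<rho>))"
    and "(\<Sum>\<rho>\<in>J. nat (V k \<rho>)) \<ge> 1"
proof -
  have nonneg: "V k \<rho> \<ge> 0" for \<rho> using assms by (auto simp: nonneg_nonzero_gens_def)
  then show "(\<Prod>\<rho>\<in>J. norm (X \<rho>) powi V k \<rho>) = (\<Prod>\<rho>\<in>J. norm (X \<rho>) ^ nat (V k \<rho>))"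
    by (simp add: power_int_def)
  have "int (\<Sum>\<rho>\<in>J. nat (V k \<rho>)) = (\<Sum>\<rho>\<in>J. V k \<rho>)" using nonneg by simp
  moreover have "(\<Sum>\<rho>\<in>J. V k \<rho>) \<ge> 1" using assms by (simp add: nonneg_nonzero_gens_def)
  ultimately show "(\<Sum>\<rho>\<in>J. nat (V k \<rho>)) \<ge> 1" by linarith
qed

lemma norm_cone_char_le:
  assumes G: "nonneg_nonzero_gens J V" "k \<in> J" and d: "0 \<le> d" "d \<le> 1"
    and X: "\<forall>\<rho>\<in>J. norm (X \<rho>) \<le> d" and Y: "\<forall>\<sigma><s. 1/2 \<le> norm (Y \<sigma>) \<and> norm (Y \<sigma>) \<le> 2"
  shows "norm (cone_char X Y J c s tau (V k)) \<le> d * 2 ^ y_degree J c s tau (V k)"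
proof -
  have "(\<Prod>\<rho>\<in>J. norm (X \<rho>) powi V k \<rho>) \<le> (\<Prod>\<rho>\<in>J. d ^ nat (V k \<rho>))"
    unfolding norm_X_part_power(1)[OF G] using X by (intro prod_mono) (auto intro: power_mono)
  also have "\<dots> = d ^ (\<Sum>\<rho>\<in>J. nat (V k \<rho>))" by (simp add: power_sum)
  also have "\<dots> \<le> d" using norm_X_part_power(2)[OF G] d by (metis power_decreasing power_one_right)
  finally show ?thesis
    unfolding norm_cone_char using norm_Y_part_bounds(1)[OF Y] d
    by (intro mult_mono) (auto intro!: prod_nonneg)
qed

lemma norm_cone_char_ge:
  assumes G: "nonneg_nonzero_gens J V" "k \<in> J" and K: "1 \<le> K"
    and X: "\<forall>\<rho>\<in>J. norm (X \<rho>) \<ge> K" and Y: "\<forall>\<sigma><s. 1/2 \<le> norm (Y \<sigma>) \<and> norm (Y \<sigma>) \<le> 2"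
  shows "norm (cone_char X Y J c s tau (V k)) \<ge> K * (1/2) ^ y_degree J c s tau (V k)"
proof -
  have "K \<le> K ^ (\<Sum>\<rho>\<in>J. nat (V k \<rho>))"
    using norm_X_part_power(2)[OF G] K by (metis power_increasing power_one_right)
  also have "\<dots> = (\<Prod>\<rho>\<in>J. K ^ nat (V k \<rho>))" by (simp add: power_sum)
  also have "\<dots> \<le> (\<Prod>\<rho>\<in>J. norm (X \<rho>) powi V k \<rho>)"
    unfolding norm_X_part_power(1)[OF G] using X K by (intro prod_mono) (auto intro: power_mono)
  finally show ?thesis
    unfolding norm_cone_char using norm_Y_part_bounds(2)[OF Y] K
    by (intro mult_mono) (auto intro!: prod_nonneg)
qed

lemma norm_near_one:
  fixes y :: complex
  assumes "dist y 1 < 1/2"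
  shows "1/2 \<le> norm y \<and> norm y \<le> 2"
  using assms norm_triangle_ineq2[of y 1] norm_triangle_ineq2[of 1 y]
  by (auto simp: dist_norm norm_minus_commute)

lemma norm_cone_char_near_zero:
  fixes C :: nat
  defines "\<delta> \<equiv> 1 / (4 * 2 ^ C)"
  assumes X: "\<forall>\<rho>\<in>J. dist (X \<rho>) (complex_of_real \<delta>) < \<delta> / 2" and Y: "\<forall>\<sigma><s. dist (Y \<sigma>) 1 < 1/2"
    and G: "nonneg_nonzero_gens J V" "k \<in> J" and deg: "y_degree J c s tau (V k) \<le> C"
  shows "norm (cone_char X Y J c s tau (V k)) < 1"
proof -
  have "(1::real) \<le> 2 ^ C" by simp
  then have "(1::real) \<le> 2 ^ C" "(1::real) \<le> 2 * 2 ^ C" by linarith+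
  then have \<delta>: "0 < \<delta>" "2 * \<delta> \<le> 1" "2 * \<delta> * 2 ^ C = 1/2" by (simp_all add: \<delta>_def field_simps)
  have "norm (X \<rho>) \<le> 2 * \<delta>" if "\<rho> \<in> J" for \<rho>
    using X that norm_triangle_ineq2[of "X \<rho>" "complex_of_real \<delta>"] \<delta> by (auto simp: dist_norm)
  then have "norm (cone_char X Y J c s tau (V k)) \<le> 2 * \<delta> * 2 ^ y_degree J c s tau (V k)"
    using \<delta> norm_near_one Y by (intro norm_cone_char_le[OF G]) auto
  also have "\<dots> \<le> 2 * \<delta> * 2 ^ C" using deg \<delta> by (intro mult_left_mono power_increasing) auto
  finally show ?thesis using \<delta> by simp
qed

lemma norm_cone_char_near_infinity:
  fixes C :: nat
  defines "K \<equiv> 4 * 2 ^ C"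
  assumes X: "\<forall>\<rho>\<in>J. dist (X \<rho>) (complex_of_real K) < 1/2" and Y: "\<forall>\<sigma><s. dist (Y \<sigma>) 1 < 1/2"
    and G: "nonneg_nonzero_gens J V" "k \<in> J" and deg: "y_degree J c s tau (V k) \<le> C"
  shows "norm (cone_char X Y J c s tau (V k)) > 1"
proof -
  have "(1::real) \<le> 2 ^ C" by simp
  then have "(1::real) \<le> 2 ^ C" "(1::real) \<le> 2 * 2 ^ C" by linarith+
  then have K: "K / 2 \<ge> 1" "K / 2 * (1/2) ^ C = 2" by (simp_all add: K_def field_simps power_divide)
  have "norm (X \<rho>) \<ge> K / 2" if "\<rho> \<in> J" for \<rho>
    using X that norm_triangle_ineq2[of "complex_of_real K" "X \<rho>"] K
    by (auto simp: dist_norm norm_minus_commute)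
  have "1 < K / 2 * (1/2) ^ C" using K by simp
  also have "\<dots> \<le> K / 2 * (1/2) ^ y_degree J c s tau (V k)"
    using deg K by (intro mult_left_mono power_decreasing) auto
  also have "\<dots> \<le> norm (cone_char X Y J c s tau (V k))"
    using K norm_near_one Y \<open>\<And>\<rho>. \<rho> \<in> J \<Longrightarrow> norm (X \<rho>) \<ge> K / 2\<close>
    by (intro norm_cone_char_ge[OF G]) auto
  finally show ?thesis .
qed
lemma laurent_fun_cone_char:
  assumes "J \<subseteq> {..<n}" "finite J"
  shows "laurent_fun (n + s) (\<lambda>v. cone_char (\<lambda>\<rho>. v \<rho>) (\<lambda>\<sigma>. v (n + \<sigma>)) J c s tau z)"
  unfolding cone_char_def using assms
  by (intro laurent_fun_mult laurent_fun_prod laurent_fun_power_int_var) auto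

lemma cone_char_joinv:
  assumes "J \<subseteq> {..<n}"
  shows "cone_char (\<lambda>\<rho>. joinv n X Y \<rho>) (\<lambda>\<sigma>. joinv n X Y (n + \<sigma>)) J c s tau z = cone_char X Y J c s tau z"
proof -
  have "(\<Prod>\<rho>\<in>J. joinv n X Y \<rho> powi z \<rho>) = (\<Prod>\<rho>\<in>J. X \<rho> powi z \<rho>)"
    using assms by (intro prod.cong) (auto simp: joinv_def)
  then show ?thesis by (simp add: cone_char_def joinv_def)
qed

lemma cone_fraction_eq_divide:
  "cone_fraction X Y J c s d = (\<Sum>p\<in>fst (snd d). cone_char X Y J c s (snd (snd d)) p) /
      (\<Prod>k\<in>J. (1 - cone_char X Y J c s (snd (snd d)) (fst d k)))"
  unfolding cone_fraction_def using prod_inversef[of "\<lambda>k. 1 - cone_char X Y J c s (snd (snd d)) (fst d k)" J]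
  by (simp add: divide_inverse o_def)

lemma sum_orthant_fractions_rational:
  assumes I: "finite I" and J: "\<And>i. i \<in> I \<Longrightarrow> finite (J i) \<and> J i \<subseteq> {..<n}"
    and D: "\<And>i d. i \<in> I \<Longrightarrow> d \<in> set (D i) \<Longrightarrow> finite (fst (snd d))"
  shows "\<exists>P Q. is_mpoly (n + s) P \<and> is_mpoly (n + s) Q \<and>
    (\<forall>X Y. (\<forall>\<rho><n. X \<rho> \<noteq> 0) \<and> (\<forall>\<sigma><s. Y \<sigma> \<noteq> 0) \<and>
       (\<forall>i\<in>I. \<forall>d\<in>set (D i). \<forall>k\<in>J i. cone_char X Y (J i) c s (snd (snd d)) (fst d k) \<noteq> 1) \<longrightarrow>
       mpoly_eval (n + s) Q (joinv n X Y) \<noteq> 0 \<and>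
       (\<Sum>i\<in>I. orthant_fraction X Y (J i) c s (D i)) =
         mpoly_eval (n + s) P (joinv n X Y) / mpoly_eval (n + s) Q (joinv n X Y))"
proof -
  define K where "K = Sigma I (\<lambda>i. {..<length (D i)})"
  define d where "d ij = D (fst ij) ! snd ij" for ij
  define ch where "ch ij v = cone_char (\<lambda>\<rho>. v \<rho>) (\<lambda>\<sigma>. v (n + \<sigma>)) (J (fst ij)) c s (snd (snd (d ij)))" for ij v
  define num where "num ij v = (\<Sum>p\<in>fst (snd (d ij)). ch ij v p)" for ij v
  define den where "den ij v = (\<Prod>k\<in>J (fst ij). 1 - ch ij v (fst (d ij) k))" for ij v
  have K: "finite K" using I by (simp add: K_def)
  have d_mem: "d ij \<in> set (D (fst ij))" if "ij \<in> K" for ij using that by (auto simp: K_def d_def)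
  have "laurent_fun (n + s) (num ij)" "laurent_fun (n + s) (den ij)" if ij: "ij \<in> K" for ij
    using J[of "fst ij"] D[OF _ d_mem[OF ij]] ij unfolding num_def den_def ch_def K_def
    by (auto intro!: laurent_fun_sum laurent_fun_prod laurent_fun_diff laurent_fun_const laurent_fun_cone_char)
  then obtain P0 Q0 where P0: "poly_fun (n + s) P0" and Q0: "poly_fun (n + s) Q0"
    and PQ0: "\<forall>v. (\<forall>j<n + s. v j \<noteq> 0) \<and> (\<forall>ij\<in>K. den ij v \<noteq> 0) \<longrightarrow>
       Q0 v \<noteq> 0 \<and> (\<Sum>ij\<in>K. num ij v / den ij v) = P0 v / Q0 v"
    using sum_laurent_fractions[OF K, of "n + s" num den] by blast
  obtain P Q where PQ: "is_mpoly (n + s) P" "is_mpoly (n + s) Q"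
    "\<forall>v. P0 v = mpoly_eval (n + s) P v" "\<forall>v. Q0 v = mpoly_eval (n + s) Q v"
    using P0 Q0 by (auto simp: poly_fun_def)
  have ch_joinv: "ch ij (joinv n X Y) = cone_char X Y (J (fst ij)) c s (snd (snd (d ij)))" if "ij \<in> K" for ij X Y
    using J[of "fst ij"] that by (auto simp: ch_def K_def fun_eq_iff intro!: cone_char_joinv)
  have "mpoly_eval (n + s) Q (joinv n X Y) \<noteq> 0 \<and>
      (\<Sum>i\<in>I. orthant_fraction X Y (J i) c s (D i)) =
        mpoly_eval (n + s) P (joinv n X Y) / mpoly_eval (n + s) Q (joinv n X Y)"
    if XY: "(\<forall>\<rho><n. X \<rho> \<noteq> 0) \<and> (\<forall>\<sigma><s. Y \<sigma> \<noteq> 0)"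
      and not1: "\<forall>i\<in>I. \<forall>d\<in>set (D i). \<forall>k\<in>J i. cone_char X Y (J i) c s (snd (snd d)) (fst d k) \<noteq> 1" for X Y
  proof -
    have "(\<Sum>ij\<in>K. num ij (joinv n X Y) / den ij (joinv n X Y)) =
        (\<Sum>i\<in>I. \<Sum>j<length (D i). num (i, j) (joinv n X Y) / den (i, j) (joinv n X Y))"
      unfolding K_def using I by (simp add: sum.Sigma)
    also have "\<dots> = (\<Sum>i\<in>I. orthant_fraction X Y (J i) c s (D i))"
      unfolding orthant_fraction_def cone_fraction_eq_divide
      by (intro sum.cong refl) (simp add: num_def den_def ch_joinv K_def d_def)
    finally have sum_eq: "(\<Sum>ij\<in>K. num ij (joinv n X Y) / den ij (joinv n X Y)) =
        (\<Sum>i\<in>I. orthant_fraction X Y (J i) c s (D i))" .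
    have "\<forall>j<n + s. joinv n X Y j \<noteq> 0" using XY by (auto simp: joinv_def)
    moreover have "\<forall>ij\<in>K. den ij (joinv n X Y) \<noteq> 0"
      using not1 d_mem J by (auto simp: den_def ch_joinv K_def)
    ultimately show ?thesis using PQ0 PQ sum_eq by auto
  qed
  then show ?thesis using PQ(1,2) by blast
qed

lemma finite_family_bounded:
  fixes f :: "'i \<Rightarrow> 'a \<Rightarrow> nat"
  assumes "finite I" "\<And>i. i \<in> I \<Longrightarrow> finite (A i)"
  shows "\<exists>C. \<forall>i\<in>I. \<forall>x\<in>A i. f i x \<le> C"
proof (intro exI ballI)
  fix i x assume "i \<in> I" "x \<in> A i"
  then have "f i x \<le> (\<Sum>x\<in>A i. f i x)" using assms by (intro member_le_sum) auto
  also have "\<dots> \<le> (\<Sum>i\<in>I. \<Sum>x\<in>A i. f i x)" using assms \<open>i \<in> I\<close> by (intro member_le_sum) auto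
  finally show "f i x \<le> (\<Sum>i\<in>I. \<Sum>x\<in>A i. f i x)" .
qed

lemma minus_one_power_card_complement:
  assumes "S \<subseteq> {..<n}" "S \<noteq> {}"
  shows "(-1::complex) ^ (card S + 1) * (-1) ^ card ({..<n} - S) = (-1) ^ (n - 1)"
proof -
  have S: "finite S" using assms finite_subset by blast
  have "card S \<le> n" "card S \<ge> 1" using card_mono[OF _ assms(1)] S assms(2) by (auto simp: Suc_le_eq card_gt_0_iff)
  moreover have "card ({..<n} - S) = n - card S" using assms S by (simp add: card_Diff_subset)
  ultimately have "card S + 1 + card ({..<n} - S) = (n - 1) + 2" by simp
  then show ?thesis by (metis power_add power_minus1_even even_numeral mult_1_right)
qed

lemma y_degree_bounded:
  assumes "finite I" "\<And>i. i \<in> I \<Longrightarrow> finite (J i)"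
  shows "\<exists>C. \<forall>i\<in>I. \<forall>d\<in>set (D i). \<forall>k\<in>J i. y_degree (J i) c s (snd (snd d)) (fst d k) \<le> C"
  using finite_family_bounded[of I "\<lambda>i. set (D i) \<times> J i" "\<lambda>i (d, k). y_degree (J i) c s (snd (snd d)) (fst d k)"]
    assms by fastforce

lemma gens_small_near_zero:
  assumes I: "finite I" and J: "\<And>i. i \<in> I \<Longrightarrow> finite (J i) \<and> J i \<subseteq> {..<n}"
    and G: "\<And>i d. i \<in> I \<Longrightarrow> d \<in> set (D i) \<Longrightarrow> nonneg_nonzero_gens (J i) (fst d)"
  shows "\<exists>X0 Y0 \<epsilon>. \<epsilon> > 0 \<and> (\<forall>X Y. (\<forall>\<rho><n. dist (X \<rho>) (X0 \<rho>) < \<epsilon>) \<and> (\<forall>\<sigma><s. dist (Y \<sigma>) (Y0 \<sigma>) < \<epsilon>) \<longrightarrow>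
     (\<forall>\<rho><n. X \<rho> \<noteq> 0) \<and> (\<forall>\<sigma><s. Y \<sigma> \<noteq> 0) \<and> (\<forall>i\<in>I. gens_small X Y (J i) c s (D i)))"
proof -
  obtain C where C: "\<forall>i\<in>I. \<forall>d\<in>set (D i). \<forall>k\<in>J i. y_degree (J i) c s (snd (snd d)) (fst d k) \<le> C"
    using y_degree_bounded[OF I, of J D c s] J by blast
  define \<delta> :: real where "\<delta> = 1 / (4 * 2 ^ C)"
  have "(1::real) \<le> 2 ^ C" by simp
  then have "(1::real) \<le> 4 * 2 ^ C" by linarith
  then have \<delta>: "0 < \<delta>" "\<delta> \<le> 1" by (simp_all add: \<delta>_def)
  have "(\<forall>\<rho><n. X \<rho> \<noteq> 0) \<and> (\<forall>\<sigma><s. Y \<sigma> \<noteq> 0) \<and> (\<forall>i\<in>I. gens_small X Y (J i) c s (D i))"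
    if X: "\<forall>\<rho><n. dist (X \<rho>) (complex_of_real \<delta>) < \<delta> / 2" and Y: "\<forall>\<sigma><s. dist (Y \<sigma>) 1 < \<delta> / 2" for X Y
  proof (intro conjI ballI allI impI)
    show "X \<rho> \<noteq> 0" if "\<rho> < n" for \<rho> using X that \<delta> by (auto simp: dist_norm)
    show "Y \<sigma> \<noteq> 0" if "\<sigma> < s" for \<sigma> using Y that \<delta> by (auto simp: dist_norm)
    fix i assume i: "i \<in> I"
    have X': "\<forall>\<rho>\<in>J i. dist (X \<rho>) (complex_of_real \<delta>) < \<delta> / 2" using X J[OF i] by auto
    have Y': "\<forall>\<sigma><s. dist (Y \<sigma>) 1 < 1/2" using Y \<delta> by (smt (verit, del_insts) field_sum_of_halves)
    show "gens_small X Y (J i) c s (D i)"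
      unfolding gens_small_def
    proof (intro ballI)
      fix d k assume "d \<in> set (D i)" "k \<in> J i"
      then show "norm (cone_char X Y (J i) c s (snd (snd d)) (fst d k)) < 1"
        using norm_cone_char_near_zero[OF X'[unfolded \<delta>_def] Y' G[OF i] _ ] C i by blast
    qed
  qed
  then show ?thesis using \<delta> by (intro exI[of _ "\<lambda>_. complex_of_real \<delta>"] exI[of _ "\<lambda>_. 1"] exI[of _ "\<delta> / 2"]) auto
qed

lemma gens_large_near_infinity:
  assumes I: "finite I" and J: "\<And>i. i \<in> I \<Longrightarrow> finite (J i) \<and> J i \<subseteq> {..<n}"
    and G: "\<And>i d. i \<in> I \<Longrightarrow> d \<in> set (D i) \<Longrightarrow> nonneg_nonzero_gens (J i) (fst d)"
  shows "\<exists>X0 Y0 \<epsilon>. \<epsilon> > 0 \<and> (\<forall>X Y. (\<forall>\<rho><n. dist (X \<rho>) (X0 \<rho>) < \<epsilon>) \<and> (\<forall>\<sigma><s. dist (Y \<sigma>) (Y0 \<sigma>) < \<epsilon>) \<longrightarrow>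
     (\<forall>i\<in>I. gens_large X Y (J i) c s (D i)))"
proof -
  obtain C where C: "\<forall>i\<in>I. \<forall>d\<in>set (D i). \<forall>k\<in>J i. y_degree (J i) c s (snd (snd d)) (fst d k) \<le> C"
    using y_degree_bounded[OF I, of J D c s] J by blast
  define K :: real where "K = 4 * 2 ^ C"
  have "\<forall>i\<in>I. gens_large X Y (J i) c s (D i)"
    if X: "\<forall>\<rho><n. dist (X \<rho>) (complex_of_real K) < 1/2" and Y: "\<forall>\<sigma><s. dist (Y \<sigma>) 1 < 1/2" for X Y
    unfolding gens_large_def
  proof (intro ballI)
    fix i d k assume i: "i \<in> I" and "d \<in> set (D i)" "k \<in> J i"
    moreover have X': "\<forall>\<rho>\<in>J i. dist (X \<rho>) (complex_of_real K) < 1/2" using X J[OF i] by auto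
    ultimately show "norm (cone_char X Y (J i) c s (snd (snd d)) (fst d k)) > 1"
      using norm_cone_char_near_infinity[OF X'[unfolded K_def] Y G[OF i]] C by blast
  qed
  then show ?thesis by (intro exI[of _ "\<lambda>_. complex_of_real K"] exI[of _ "\<lambda>_. 1"] exI[of _ "1/2"]) auto
qed
definition zeta_fraction :: "nat \<Rightarrow> nat \<Rightarrow> nat \<Rightarrow> (nat \<Rightarrow> nat \<Rightarrow> nat \<Rightarrow> int) \<Rightarrow> (nat set \<Rightarrow> fraction_data list) \<Rightarrow>
    (nat \<Rightarrow> complex) \<Rightarrow> (nat \<Rightarrow> complex) \<Rightarrow> complex" where
  "zeta_fraction l n s c D X Y = (\<Sum>S | S \<subseteq> {l..<n} \<and> S \<noteq> {}. orthant_fraction X Y ({..<n} - S) c s (D S))"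

lemma cone_has_sum_zeta_fraction:
  assumes n: "n = l + a"
    and D: "\<forall>S. orthant_expansion n s t c ({..<n} - S) (\<lambda>k. k < l) (D S)"
    and X: "\<forall>\<rho><n. X \<rho> \<noteq> 0" and Y: "\<forall>\<sigma><s. Y \<sigma> \<noteq> 0"
    and small: "\<And>S. S \<subseteq> {l..<n} \<Longrightarrow> S \<noteq> {} \<Longrightarrow> gens_small X Y ({..<n} - S) c s (D S)"
  shows "((\<lambda>r. Zterm c n s t X Y r) has_sum zeta_fraction l n s c D X Y) (cone l a)"
proof -
  have "((\<lambda>r. Zterm c n s t X Y r) has_sum orthant_fraction X Y ({..<n} - S) c s (D S)) (cone_face l n S)"
    if S: "S \<subseteq> {l..<n}" "S \<noteq> {}" for S
  proof (rule has_sum_int_vec_reindex)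
    have nonzero: "(\<forall>\<rho>\<in>{..<n} - S. X \<rho> \<noteq> 0) \<and> (\<forall>\<sigma><s. Y \<sigma> \<noteq> 0)" using X Y by auto
    show "((\<lambda>z. Zterm c n s t X Y (\<lambda>i. nat (z i))) has_sum orthant_fraction X Y ({..<n} - S) c s (D S))
        ((\<lambda>r i. int (r i)) ` cone_face l n S)"
      unfolding int_image_cone_face[OF S(1)]
      using D[unfolded orthant_expansion_def] nonzero small[OF S] by blast
  qed
  then have "((\<lambda>r. Zterm c n s t X Y r) has_sum zeta_fraction l n s c D X Y)
      (\<Union>S\<in>{S. S \<subseteq> {l..<n} \<and> S \<noteq> {}}. cone_face l n S)"
    unfolding zeta_fraction_def using cone_eq_UN_cone_face(2)[OF n] by (intro sum_has_sum) auto
  then show ?thesis unfolding cone_eq_UN_cone_face(1)[OF n, symmetric] .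
qed

lemma cone_circ_has_sum_zeta_fraction:
  assumes n: "n = l + a"
    and D: "\<forall>S. orthant_expansion n s t c ({..<n} - S) (\<lambda>k. k < l) (D S)"
    and X: "\<forall>\<rho><n. X \<rho> \<noteq> 0" and Y: "\<forall>\<sigma><s. Y \<sigma> \<noteq> 0"
    and large: "\<And>S. S \<subseteq> {l..<n} \<Longrightarrow> S \<noteq> {} \<Longrightarrow> gens_large X Y ({..<n} - S) c s (D S)"
  shows "((\<lambda>r. Zterm c n s t (\<lambda>\<rho>. inverse (X \<rho>)) (\<lambda>\<sigma>. inverse (Y \<sigma>)) r) has_sum
      ((-1) ^ (n - 1) * zeta_fraction l n s c D X Y)) (cone_circ l a)"
proof -
  have "((\<lambda>r. Zterm c n s t (\<lambda>\<rho>. inverse (X \<rho>)) (\<lambda>\<sigma>. inverse (Y \<sigma>)) r) has_sum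
      ((-1) ^ card ({..<n} - S) * orthant_fraction X Y ({..<n} - S) c s (D S))) (circ_face l n S)"
    if S: "S \<subseteq> {l..<n}" "S \<noteq> {}" for S
  proof (rule has_sum_int_vec_reindex)
    have nonzero: "(\<forall>\<rho>\<in>{..<n} - S. X \<rho> \<noteq> 0) \<and> (\<forall>\<sigma><s. Y \<sigma> \<noteq> 0)" using X Y by auto
    show "((\<lambda>z. Zterm c n s t (\<lambda>\<rho>. inverse (X \<rho>)) (\<lambda>\<sigma>. inverse (Y \<sigma>)) (\<lambda>i. nat (z i))) has_sum
        ((-1) ^ card ({..<n} - S) * orthant_fraction X Y ({..<n} - S) c s (D S)))
        ((\<lambda>r i. int (r i)) ` circ_face l n S)"
      unfolding int_image_circ_face[OF S(1) le_add1[of l a, folded n]]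
      using D[unfolded orthant_expansion_def] nonzero large[OF S] by blast
  qed
  then have "((\<lambda>r. Zterm c n s t (\<lambda>\<rho>. inverse (X \<rho>)) (\<lambda>\<sigma>. inverse (Y \<sigma>)) r) has_sum
      (\<Sum>S\<in>{S. S \<subseteq> {l..<n} \<and> S \<noteq> {}}. (-1) ^ (card S + 1) *
         ((-1) ^ card ({..<n} - S) * orthant_fraction X Y ({..<n} - S) c s (D S)))) (cone_circ l a)"
    by (intro cone_circ_inclusion_exclusion[OF n])
  also have "(\<Sum>S\<in>{S. S \<subseteq> {l..<n} \<and> S \<noteq> {}}. (-1) ^ (card S + 1) *
         ((-1) ^ card ({..<n} - S) * orthant_fraction X Y ({..<n} - S) c s (D S))) =
      (\<Sum>S\<in>{S. S \<subseteq> {l..<n} \<and> S \<noteq> {}}. (-1) ^ (n - 1) * orthant_fraction X Y ({..<n} - S) c s (D S))"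
  proof (rule sum.cong[OF refl])
    fix S assume "S \<in> {S. S \<subseteq> {l..<n} \<and> S \<noteq> {}}"
    then have "(-1) ^ (card S + 1) * (-1) ^ card ({..<n} - S) = ((-1) ^ (n - 1) :: complex)"
      by (intro minus_one_power_card_complement) auto
    then show "(-1) ^ (card S + 1) * ((-1) ^ card ({..<n} - S) * orthant_fraction X Y ({..<n} - S) c s (D S)) =
        (-1) ^ (n - 1) * orthant_fraction X Y ({..<n} - S) c s (D S)"
      by (simp only: mult.assoc[symmetric])
  qed
  finally show ?thesis by (simp add: zeta_fraction_def sum_distrib_left)
qed

definition zeta_fraction_represented :: "nat \<Rightarrow> nat \<Rightarrow> nat \<Rightarrow> (nat \<Rightarrow> nat \<Rightarrow> nat \<Rightarrow> int) \<Rightarrow>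
    (nat set \<Rightarrow> fraction_data list) \<Rightarrow> ((nat \<Rightarrow> nat) \<Rightarrow> complex) \<Rightarrow> ((nat \<Rightarrow> nat) \<Rightarrow> complex) \<Rightarrow> bool" where
  "zeta_fraction_represented l n s c D P Q \<longleftrightarrow>
     (\<forall>X Y. (\<forall>\<rho><n. X \<rho> \<noteq> 0) \<and> (\<forall>\<sigma><s. Y \<sigma> \<noteq> 0) \<and>
        (\<forall>S. S \<subseteq> {l..<n} \<and> S \<noteq> {} \<longrightarrow>
           (\<forall>d\<in>set (D S). \<forall>k\<in>{..<n} - S. cone_char X Y ({..<n} - S) c s (snd (snd d)) (fst d k) \<noteq> 1)) \<longrightarrow>
      mpoly_eval (n + s) Q (joinv n X Y) \<noteq> 0 \<and>
      zeta_fraction l n s c D X Y = mpoly_eval (n + s) P (joinv n X Y) / mpoly_eval (n + s) Q (joinv n X Y))"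

lemma zeta_fraction_rational:
  assumes D: "\<forall>S. orthant_expansion n s t c ({..<n} - S) (\<lambda>k. k < l) (D S)"
  shows "\<exists>P Q. is_mpoly (n + s) P \<and> is_mpoly (n + s) Q \<and> zeta_fraction_represented l n s c D P Q"
proof -
  define Fc where "Fc = {S. S \<subseteq> {l..<n} \<and> S \<noteq> {}}"
  have "finite Fc" unfolding Fc_def by (rule finite_subset[of _ "Pow {l..<n}"]) auto
  moreover have "finite ({..<n} - S) \<and> {..<n} - S \<subseteq> {..<n}" for S by auto
  moreover have "finite (fst (snd d))" if "d \<in> set (D S)" for S d
    using D that by (auto simp: orthant_expansion_def)
  ultimately obtain P Q where PQ: "is_mpoly (n + s) P" "is_mpoly (n + s) Q"
    "\<forall>X Y. (\<forall>\<rho><n. X \<rho> \<noteq> 0) \<and> (\<forall>\<sigma><s. Y \<sigma> \<noteq> 0) \<and>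
        (\<forall>S\<in>Fc. \<forall>d\<in>set (D S). \<forall>k\<in>{..<n} - S. cone_char X Y ({..<n} - S) c s (snd (snd d)) (fst d k) \<noteq> 1) \<longrightarrow>
      mpoly_eval (n + s) Q (joinv n X Y) \<noteq> 0 \<and>
      (\<Sum>S\<in>Fc. orthant_fraction X Y ({..<n} - S) c s (D S)) =
        mpoly_eval (n + s) P (joinv n X Y) / mpoly_eval (n + s) Q (joinv n X Y)"
    using sum_orthant_fractions_rational[where I=Fc and J="\<lambda>S. {..<n} - S" and D=D and n=n and s=s and c=c]
    by auto
  have "zeta_fraction_represented l n s c D P Q"
    unfolding zeta_fraction_represented_def zeta_fraction_def using PQ(3) by (simp add: Fc_def)
  then show ?thesis using PQ(1,2) by blast
qed
lemma cone_has_sum_near_zero: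
  assumes n: "n = l + a" and D: "\<forall>S. orthant_expansion n s t c ({..<n} - S) (\<lambda>k. k < l) (D S)"
    and PQ: "zeta_fraction_represented l n s c D P Q"
  shows "\<exists>X0 Y0 \<epsilon>. \<epsilon> > 0 \<and> (\<forall>X Y. (\<forall>\<rho><n. dist (X \<rho>) (X0 \<rho>) < \<epsilon>) \<and> (\<forall>\<sigma><s. dist (Y \<sigma>) (Y0 \<sigma>) < \<epsilon>) \<longrightarrow>
     mpoly_eval (n + s) Q (joinv n X Y) \<noteq> 0 \<and>
     ((\<lambda>r. Zterm c n s t X Y r) has_sum
        (mpoly_eval (n + s) P (joinv n X Y) / mpoly_eval (n + s) Q (joinv n X Y))) (cone l a))"
proof -
  define Fc where "Fc = {S. S \<subseteq> {l..<n} \<and> S \<noteq> {}}"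
  have "finite Fc" unfolding Fc_def by (rule finite_subset[of _ "Pow {l..<n}"]) auto
  moreover have "finite ({..<n} - S) \<and> {..<n} - S \<subseteq> {..<n}" for S by auto
  moreover have "nonneg_nonzero_gens ({..<n} - S) (fst d)" if "d \<in> set (D S)" for S d
    using D that by (auto simp: orthant_expansion_def)
  ultimately obtain X0 Y0 \<epsilon> where "\<epsilon> > 0" and near_zero: "\<forall>X Y. (\<forall>\<rho><n. dist (X \<rho>) (X0 \<rho>) < \<epsilon>) \<and>
      (\<forall>\<sigma><s. dist (Y \<sigma>) (Y0 \<sigma>) < \<epsilon>) \<longrightarrow>
      (\<forall>\<rho><n. X \<rho> \<noteq> 0) \<and> (\<forall>\<sigma><s. Y \<sigma> \<noteq> 0) \<and> (\<forall>S\<in>Fc. gens_small X Y ({..<n} - S) c s (D S))"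
    using gens_small_near_zero[where I=Fc and J="\<lambda>S. {..<n} - S" and D=D and n=n and s=s and c=c] by auto
  have "mpoly_eval (n + s) Q (joinv n X Y) \<noteq> 0 \<and>
     ((\<lambda>r. Zterm c n s t X Y r) has_sum
        (mpoly_eval (n + s) P (joinv n X Y) / mpoly_eval (n + s) Q (joinv n X Y))) (cone l a)"
    if "(\<forall>\<rho><n. dist (X \<rho>) (X0 \<rho>) < \<epsilon>) \<and> (\<forall>\<sigma><s. dist (Y \<sigma>) (Y0 \<sigma>) < \<epsilon>)" for X Y
  proof -
    have XY: "\<forall>\<rho><n. X \<rho> \<noteq> 0" "\<forall>\<sigma><s. Y \<sigma> \<noteq> 0" and small: "\<forall>S\<in>Fc. gens_small X Y ({..<n} - S) c s (D S)"
      using near_zero that by blast+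
    then have "\<forall>S. S \<subseteq> {l..<n} \<and> S \<noteq> {} \<longrightarrow>
        (\<forall>d\<in>set (D S). \<forall>k\<in>{..<n} - S. cone_char X Y ({..<n} - S) c s (snd (snd d)) (fst d k) \<noteq> 1)"
    proof (intro allI impI ballI)
      fix S d k assume "S \<subseteq> {l..<n} \<and> S \<noteq> {}" "d \<in> set (D S)" "k \<in> {..<n} - S"
      then have "norm (cone_char X Y ({..<n} - S) c s (snd (snd d)) (fst d k)) < 1"
        using small unfolding gens_small_def Fc_def by blast
      then show "cone_char X Y ({..<n} - S) c s (snd (snd d)) (fst d k) \<noteq> 1" by auto
    qed
    then show ?thesis
      using PQ XY cone_has_sum_zeta_fraction[OF n D XY] small
      unfolding zeta_fraction_represented_def Fc_def by auto
  qed
  then show ?thesis using \<open>\<epsilon> > 0\<close> by blast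
qed

lemma cone_circ_has_sum_near_infinity:
  assumes n: "n = l + a" and D: "\<forall>S. orthant_expansion n s t c ({..<n} - S) (\<lambda>k. k < l) (D S)"
    and PQ: "zeta_fraction_represented l n s c D P Q"
  shows "\<exists>X0 Y0 \<epsilon>. \<epsilon> > 0 \<and> (\<forall>X Y. (\<forall>\<rho><n. dist (X \<rho>) (X0 \<rho>) < \<epsilon> \<and> X \<rho> \<noteq> 0) \<and>
       (\<forall>\<sigma><s. dist (Y \<sigma>) (Y0 \<sigma>) < \<epsilon> \<and> Y \<sigma> \<noteq> 0) \<longrightarrow>
     mpoly_eval (n + s) Q (joinv n X Y) \<noteq> 0 \<and>
     ((\<lambda>r. Zterm c n s t (\<lambda>\<rho>. inverse (X \<rho>)) (\<lambda>\<sigma>. inverse (Y \<sigma>)) r) has_sum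
        ((-1) ^ (n - 1) * (mpoly_eval (n + s) P (joinv n X Y) / mpoly_eval (n + s) Q (joinv n X Y))))
        (cone_circ l a))"
proof -
  define Fc where "Fc = {S. S \<subseteq> {l..<n} \<and> S \<noteq> {}}"
  have "finite Fc" unfolding Fc_def by (rule finite_subset[of _ "Pow {l..<n}"]) auto
  moreover have "finite ({..<n} - S) \<and> {..<n} - S \<subseteq> {..<n}" for S by auto
  moreover have "nonneg_nonzero_gens ({..<n} - S) (fst d)" if "d \<in> set (D S)" for S d
    using D that by (auto simp: orthant_expansion_def)
  ultimately obtain X0 Y0 \<epsilon> where "\<epsilon> > 0" and near_infinity: "\<forall>X Y. (\<forall>\<rho><n. dist (X \<rho>) (X0 \<rho>) < \<epsilon>) \<and>
      (\<forall>\<sigma><s. dist (Y \<sigma>) (Y0 \<sigma>) < \<epsilon>) \<longrightarrow> (\<forall>S\<in>Fc. gens_large X Y ({..<n} - S) c s (D S))"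
    using gens_large_near_infinity[where I=Fc and J="\<lambda>S. {..<n} - S" and D=D and n=n and s=s and c=c] by auto
  have "mpoly_eval (n + s) Q (joinv n X Y) \<noteq> 0 \<and>
     ((\<lambda>r. Zterm c n s t (\<lambda>\<rho>. inverse (X \<rho>)) (\<lambda>\<sigma>. inverse (Y \<sigma>)) r) has_sum
        ((-1) ^ (n - 1) * (mpoly_eval (n + s) P (joinv n X Y) / mpoly_eval (n + s) Q (joinv n X Y))))
        (cone_circ l a)"
    if near: "(\<forall>\<rho><n. dist (X \<rho>) (X0 \<rho>) < \<epsilon> \<and> X \<rho> \<noteq> 0) \<and> (\<forall>\<sigma><s. dist (Y \<sigma>) (Y0 \<sigma>) < \<epsilon> \<and> Y \<sigma> \<noteq> 0)"
    for X Y
  proof -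
    have XY: "\<forall>\<rho><n. X \<rho> \<noteq> 0" "\<forall>\<sigma><s. Y \<sigma> \<noteq> 0" using near by auto
    have large: "\<forall>S\<in>Fc. gens_large X Y ({..<n} - S) c s (D S)" using near_infinity near by blast
    then have "\<forall>S. S \<subseteq> {l..<n} \<and> S \<noteq> {} \<longrightarrow>
        (\<forall>d\<in>set (D S). \<forall>k\<in>{..<n} - S. cone_char X Y ({..<n} - S) c s (snd (snd d)) (fst d k) \<noteq> 1)"
    proof (intro allI impI ballI)
      fix S d k assume "S \<subseteq> {l..<n} \<and> S \<noteq> {}" "d \<in> set (D S)" "k \<in> {..<n} - S"
      then have "norm (cone_char X Y ({..<n} - S) c s (snd (snd d)) (fst d k)) > 1"
        using large unfolding gens_large_def Fc_def by blast
      then show "cone_char X Y ({..<n} - S) c s (snd (snd d)) (fst d k) \<noteq> 1" by auto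
    qed
    then show ?thesis
      using PQ XY cone_circ_has_sum_zeta_fraction[OF n D XY] large
      unfolding zeta_fraction_represented_def Fc_def by auto
  qed
  then show ?thesis using \<open>\<epsilon> > 0\<close> by blast
qed
theorem proposition4p5:
  fixes l a s t :: nat and c :: "nat \<Rightarrow> nat \<Rightarrow> nat \<Rightarrow> int"
  assumes "1 \<le> l" "1 \<le> a" "1 \<le> s" "1 \<le> t"
  shows "\<exists>P Q. is_mpoly (l + a + s) P \<and> is_mpoly (l + a + s) Q \<and>
    (\<exists>X0 Y0 \<epsilon>. \<epsilon> > 0 \<and>
       (\<forall>X Y. (\<forall>\<rho><l + a. dist (X \<rho>) (X0 \<rho>) < \<epsilon>) \<and> (\<forall>\<sigma><s. dist (Y \<sigma>) (Y0 \<sigma>) < \<epsilon>) \<longrightarrow>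
          mpoly_eval (l + a + s) Q (joinv (l + a) X Y) \<noteq> 0 \<and>
          ((\<lambda>r. Zterm c (l + a) s t X Y r) has_sum
             (mpoly_eval (l + a + s) P (joinv (l + a) X Y) /
              mpoly_eval (l + a + s) Q (joinv (l + a) X Y))) (cone l a))) \<and>
    (\<exists>X0 Y0 \<epsilon>. \<epsilon> > 0 \<and>
       (\<forall>X Y. (\<forall>\<rho><l + a. dist (X \<rho>) (X0 \<rho>) < \<epsilon> \<and> X \<rho> \<noteq> 0) \<and>
              (\<forall>\<sigma><s. dist (Y \<sigma>) (Y0 \<sigma>) < \<epsilon> \<and> Y \<sigma> \<noteq> 0) \<longrightarrow>
          mpoly_eval (l + a + s) Q (joinv (l + a) X Y) \<noteq> 0 \<and>
          ((\<lambda>r. Zterm c (l + a) s t (\<lambda>\<rho>. inverse (X \<rho>)) (\<lambda>\<sigma>. inverse (Y \<sigma>)) r) has_sum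
             ((-1) ^ (l + a - 1) *
              (mpoly_eval (l + a + s) P (joinv (l + a) X Y) /
               mpoly_eval (l + a + s) Q (joinv (l + a) X Y)))) (cone_circ l a)))"
proof -
  define n where "n = l + a"
  have "\<forall>S. \<exists>D. orthant_expansion n s t c ({..<n} - S) (\<lambda>k. k < l) D"
    by (intro allI orthant_expansion_exists[OF _ _ assms(4)]) auto
  then obtain D where D: "\<forall>S. orthant_expansion n s t c ({..<n} - S) (\<lambda>k. k < l) (D S)"
    by (rule choice[THEN exE])
  then obtain P Q where PQ: "is_mpoly (n + s) P" "is_mpoly (n + s) Q" "zeta_fraction_represented l n s c D P Q"
    using zeta_fraction_rational by blast
  show ?thesis
    unfolding n_def[symmetric]
    by (intro exI[of _ P] exI[of _ Q] conjI PQ(1,2) cone_has_sum_near_zero[OF n_def D PQ(3)]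
        cone_circ_has_sum_near_infinity[OF n_def D PQ(3)])
qed
end
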